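(* Let $\mathfrak{B}$ be a tightly $\sigma$-filtered Boolean algebra and let $\mathcal{H}$ be a family of countable subsets of $\mathfrak{B}$ with $|\mathcal{H}|=\omega_2$. Then there exist $\mathcal{H}'\subseteq\mathcal{H}$ with $|\mathcal{H}'|=\omega_2$ and a countable subalgebra $R\subseteq\mathfrak{B}$ such that for every $n$, every Boolean polynomial $P(x_1,\ldots,x_n)$, every pairwise different $H_1,\ldots,H_n\in\mathcal{H}'$ and every $a_i\in H_i$: if $P(a_1,\ldots,a_n)=0$, then there exist $r_i^-,r_i^+\in R$ with $r_i^-\le a_i\le r_i^+$ ($i=1,\ldots,n$) and $P(r_1^{\varepsilon_1},\ldots,r_n^{\varepsilon_n})=0$ for every choice of signs $\varepsilon_i\in\{+,-\}$.
   Context: For a subset $X$ of a Boolean algebra, $\langle X\rangle$ is the subalgebra generated by $X$. Two subalgebras $A,S$ of a Boolean algebra commute if whenever $a\in A$, $s\in S$ and $a\wedge s=0$, there exist $b_1,b_2\in A\cap S$ with $a\le b_1$, $s\le b_2$, $b_1\wedge b_2=0$. A square of inclusions $R\subseteq A\subseteq B$, $R\subseteq S\subseteq B$ is a push-out diagram if $\langle A\cup S\rangle=B$, $A\cap S=R$, and $A$ and $S$ commute. A Boolean algebra $\mathfrak{B}$ is tightly $\sigma$-filtered if there is an increasing chain of subalgebras $(B_\alpha)_{\alpha<\xi}$ indexed by an ordinal $\xi$ with: $B_0=\{0,1\}$; $\mathfrak{B}=\bigcup_{\alpha<\xi}B_\alpha$; $B_\alpha=\bigcup_{\beta<\alpha}B_\beta$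 for limit $\alpha$; and for every $\alpha<\xi$ there are countable subalgebras $R_\alpha,S_\alpha\subseteq\mathfrak{B}$ such that the inclusions $R_\alpha\subseteq B_\alpha\subseteq B_{\alpha+1}$, $R_\alpha\subseteq S_\alpha\subseteq B_{\alpha+1}$ form a push-out diagram. *)

theory Defs
  imports Main "HOL-Library.Countable_Set"
begin

section \<open>Subalgebras of a Boolean algebra (the ambient algebra is the type 'a, i.e. UNIV)\<close>

definition subalgebra :: "'a::boolean_algebra set \<Rightarrow> bool" where
  "subalgebra A \<longleftrightarrow> bot \<in> A \<and> top \<in> A \<and>
     (\<forall>x\<in>A. \<forall>y\<in>A. inf x y \<in> A \<and> sup x y \<in> A) \<and> (\<forall>x\<in>A. - x \<in> A)"

definition generated :: "'a::boolean_algebra set \<Rightarrow> 'a set" where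
  "generated X = \<Inter>{A. subalgebra A \<and> X \<subseteq> A}"

definition commute :: "'a::boolean_algebra set \<Rightarrow> 'a set \<Rightarrow> bool" where
  "commute A S \<longleftrightarrow> (\<forall>a\<in>A. \<forall>s\<in>S. inf a s = bot \<longrightarrow>
      (\<exists>b1\<in>A \<inter> S. \<exists>b2\<in>A \<inter> S. a \<le> b1 \<and> s \<le> b2 \<and> inf b1 b2 = bot))"

definition pushout :: "'a::boolean_algebra set \<Rightarrow> 'a set \<Rightarrow> 'a set \<Rightarrow> 'a set \<Rightarrow> bool" where
  "pushout R A S B \<longleftrightarrow> R \<subseteq> A \<and> A \<subseteq> B \<and> R \<subseteq> S \<and> S \<subseteq> B \<and>
     generated (A \<union> S) = B \<and> A \<inter> S = R \<and> commute A S"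

section \<open>Tight sigma-filtrations, indexed by a well-ordered type (an ordinal \<xi> > 0)\<close>

definition is_succ :: "'i::wellorder \<Rightarrow> 'i \<Rightarrow> bool" where
  "is_succ \<beta> \<alpha> \<longleftrightarrow> \<alpha> < \<beta> \<and> \<not> (\<exists>\<gamma>. \<alpha> < \<gamma> \<and> \<gamma> < \<beta>)"

definition is_limit :: "'i::wellorder \<Rightarrow> bool" where
  "is_limit \<alpha> \<longleftrightarrow> (\<exists>\<beta>. \<beta> < \<alpha>) \<and> \<not> (\<exists>\<gamma>. is_succ \<alpha> \<gamma>)"

definition tight_sigma_filtration :: "('i::wellorder \<Rightarrow> 'a::boolean_algebra set) \<Rightarrow> bool" where
  "tight_sigma_filtration Bf \<longleftrightarrow>
     (\<forall>\<alpha>. subalgebra (Bf \<alpha>)) \<and>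
     (\<forall>\<alpha> \<beta>. \<alpha> \<le> \<beta> \<longrightarrow> Bf \<alpha> \<subseteq> Bf \<beta>) \<and>
     (\<forall>\<alpha>. (\<forall>\<beta>. \<alpha> \<le> \<beta>) \<longrightarrow> Bf \<alpha> = {bot, top}) \<and>
     (\<Union>\<alpha>. Bf \<alpha>) = UNIV \<and>
     (\<forall>\<alpha>. is_limit \<alpha> \<longrightarrow> Bf \<alpha> = (\<Union>\<beta>\<in>{\<beta>. \<beta> < \<alpha>}. Bf \<beta>)) \<and>
     (\<forall>\<alpha> \<beta>. is_succ \<beta> \<alpha> \<longrightarrow>
        (\<exists>R S. countable R \<and> countable S \<and> subalgebra R \<and> subalgebra S \<and>
               pushout R (Bf \<alpha>) S (Bf \<beta>)))"

text \<open>The Boolean algebra (the type 'a) is tightly sigma-filtered iff some such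
  filtration exists; in the theorem the index type is universally quantified.\<close>

datatype bpoly = Var nat | Zero | One | Meet bpoly bpoly | Join bpoly bpoly | Compl bpoly

primrec beval :: "bpoly \<Rightarrow> (nat \<Rightarrow> 'a::boolean_algebra) \<Rightarrow> 'a" where
  "beval (Var i) v = v i"
| "beval Zero v = bot"
| "beval One v = top"
| "beval (Meet p q) v = inf (beval p v) (beval q v)"
| "beval (Join p q) v = sup (beval p v) (beval q v)"
| "beval (Compl p) v = - beval p v"

primrec bvars :: "bpoly \<Rightarrow> nat set" where
  "bvars (Var i) = {i}"
| "bvars Zero = {}"
| "bvars One = {}"
| "bvars (Meet p q) = bvars p \<union> bvars q"
| "bvars (Join p q) = bvars p \<union> bvars q"
| "bvars (Compl p) = bvars p"

abbreviation omega2 :: "nat set set rel" where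
  "omega2 \<equiv> cardSuc (cardSuc natLeq)"

end

theory Submission
  imports Defs "HOL-Library.Countable_Set_Type"
begin

text \<open>Each countable \<open>H \<in> \<H>\<close> lies in the algebra generated by the new generators \<open>S\<^sub>\<beta>\<close> of
  a countable closed set \<open>X\<^sub>H\<close> of steps of the filtration, closed meaning that the amalgamated
  part \<open>R\<^sub>\<beta>\<close> of each step of \<open>X\<^sub>H\<close> is generated by its earlier steps. Algebras generated by
  closed sets \<open>X\<close>, \<open>Y\<close> commute over the algebra generated by \<open>X \<inter> Y\<close>, by induction along
  the filtration using the push-out squares. A weak \<open>\<Delta>\<close>-system argument gives \<open>\<omega>\<^sub>2\<close> members
  of \<open>\<H>\<close> whose supports pairwise meet inside one countable closed set \<open>D\<close>, and \<open>R\<close> is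
  the countable algebra generated by \<open>D\<close>. A polynomial relation is then interpolated one
  variable at a time, separating that variable from the two cofactors of the polynomial.\<close>

section \<open>Subalgebras and generated subalgebras\<close>

lemma subalgebraD:
  assumes "subalgebra A"
  shows subalgebra_bot: "bot \<in> A" and subalgebra_top: "top \<in> A"
    and subalgebra_inf: "x \<in> A \<Longrightarrow> y \<in> A \<Longrightarrow> inf x y \<in> A"
    and subalgebra_sup: "x \<in> A \<Longrightarrow> y \<in> A \<Longrightarrow> sup x y \<in> A"
    and subalgebra_compl: "x \<in> A \<Longrightarrow> - x \<in> A"
  using assms unfolding subalgebra_def by blast+

lemma subalgebra_generated: "subalgebra (generated X)"
  unfolding subalgebra_def generated_def by blast

lemma generated_superset: "X \<subseteq> generated X"
  unfolding generated_def by blast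

lemma generated_minimal: "subalgebra A \<Longrightarrow> X \<subseteq> A \<Longrightarrow> generated X \<subseteq> A"
  unfolding generated_def by blast

lemma generated_mono: "X \<subseteq> Y \<Longrightarrow> generated X \<subseteq> generated Y"
  unfolding generated_def by blast

lemma generated_Un_generated: "generated (generated X \<union> Y) = generated (X \<union> Y)"
proof
  show "generated (generated X \<union> Y) \<subseteq> generated (X \<union> Y)"
    using generated_mono[of X "X \<union> Y"] generated_superset[of "X \<union> Y"]
    by (intro generated_minimal[OF subalgebra_generated]) blast
  show "generated (X \<union> Y) \<subseteq> generated (generated X \<union> Y)"
    using generated_superset[of X] by (intro generated_mono) blast
qed

lemma subalgebra_directed_UN:
  assumes sub: "\<And>d. d \<in> I \<Longrightarrow> subalgebra (A d)" and "I \<noteq> {}"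
    and directed: "\<And>d1 d2. d1 \<in> I \<Longrightarrow> d2 \<in> I \<Longrightarrow> \<exists>d\<in>I. A d1 \<subseteq> A d \<and> A d2 \<subseteq> A d"
  shows "subalgebra (\<Union>d\<in>I. A d)"
  unfolding subalgebra_def
proof (intro conjI ballI)
  obtain d0 where "d0 \<in> I" using \<open>I \<noteq> {}\<close> by blast
  thus "bot \<in> (\<Union>d\<in>I. A d)" "top \<in> (\<Union>d\<in>I. A d)"
    using subalgebra_bot[OF sub] subalgebra_top[OF sub] by blast+
next
  fix x y assume "x \<in> (\<Union>d\<in>I. A d)" "y \<in> (\<Union>d\<in>I. A d)"
  then obtain d where d: "d \<in> I" "x \<in> A d" "y \<in> A d" using directed by (metis UN_E subsetD)
  show "inf x y \<in> (\<Union>d\<in>I. A d)" using d subalgebra_inf[OF sub[OF d(1)] d(2,3)] by blast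
  show "sup x y \<in> (\<Union>d\<in>I. A d)" using d subalgebra_sup[OF sub[OF d(1)] d(2,3)] by blast
next
  fix x assume "x \<in> (\<Union>d\<in>I. A d)"
  then obtain d where d: "d \<in> I" "x \<in> A d" by blast
  show "- x \<in> (\<Union>d\<in>I. A d)" using d subalgebra_compl[OF sub[OF d(1)] d(2)] by blast
qed

lemma beval_in_subalgebra:
  "subalgebra A \<Longrightarrow> (\<And>i. i \<in> bvars P \<Longrightarrow> v i \<in> A) \<Longrightarrow> beval P v \<in> A"
  by (induction P) (auto intro: subalgebraD)

lemma beval_cong: "(\<And>i. i \<in> bvars P \<Longrightarrow> v i = w i) \<Longrightarrow> beval P v = beval P w"
  by (induction P) auto

lemma finite_bvars: "finite (bvars P)"
  by (induction P) auto

instance bpoly :: countable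
  by countable_datatype

text \<open>A countable set is enumerated by a valuation, and the values of all Boolean
  polynomials under that valuation form a countable subalgebra containing it.\<close>

lemma countable_generated:
  assumes "countable X"
  shows "countable (generated X)"
proof -
  define v where "v = from_nat_into (insert bot X)"
  define T where "T = range (\<lambda>P. beval P v)"
  have "subalgebra T"
    unfolding subalgebra_def T_def
  proof (intro conjI ballI)
    show "bot \<in> range (\<lambda>P. beval P v)" by (rule range_eqI[of _ _ Zero]) simp
    show "top \<in> range (\<lambda>P. beval P v)" by (rule range_eqI[of _ _ One]) simp
  next
    fix x y assume "x \<in> range (\<lambda>P. beval P v)" "y \<in> range (\<lambda>P. beval P v)"
    then obtain p q where "x = beval p v" "y = beval q v" by blast
    hence "inf x y = beval (Meet p q) v" and "sup x y = beval (Join p q) v" by simp_all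
    show "inf x y \<in> range (\<lambda>P. beval P v)" by (rule range_eqI) fact
    show "sup x y \<in> range (\<lambda>P. beval P v)" by (rule range_eqI) fact
  next
    fix x assume "x \<in> range (\<lambda>P. beval P v)"
    then obtain p where "x = beval p v" by blast
    hence "- x = beval (Compl p) v" by simp
    thus "- x \<in> range (\<lambda>P. beval P v)" by (rule range_eqI)
  qed
  moreover have "X \<subseteq> T"
  proof
    fix x assume "x \<in> X"
    then obtain n where "v n = x"
      using from_nat_into_surj[of "insert bot X" x] assms unfolding v_def by auto
    hence "x = beval (Var n) v" by simp
    thus "x \<in> T" unfolding T_def by (rule range_eqI)
  qed
  ultimately have "generated X \<subseteq> T" by (rule generated_minimal)
  thus ?thesis unfolding T_def by (rule countable_subset) simp
qed

text \<open>The subalgebra generated by two subalgebras consists of the finite joins of meets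
  \<open>a \<sqinter> s\<close>.\<close>

inductive_set meet_joins :: "'a::boolean_algebra set \<Rightarrow> 'a set \<Rightarrow> 'a set" for A S where
  bot: "bot \<in> meet_joins A S"
| meet: "a \<in> A \<Longrightarrow> s \<in> S \<Longrightarrow> inf a s \<in> meet_joins A S"
| join: "x \<in> meet_joins A S \<Longrightarrow> y \<in> meet_joins A S \<Longrightarrow> sup x y \<in> meet_joins A S"

context
  fixes A S :: "'a::boolean_algebra set"
  assumes A: "subalgebra A" and S: "subalgebra S"
begin

lemma meet_joins_top: "top \<in> meet_joins A S"
  using meet_joins.meet[OF subalgebra_top[OF A] subalgebra_top[OF S]] by simp

lemma meet_joins_inf_meet:
  "y \<in> meet_joins A S \<Longrightarrow> a \<in> A \<Longrightarrow> s \<in> S \<Longrightarrow> inf (inf a s) y \<in> meet_joins A S"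
proof (induction rule: meet_joins.induct)
  case (meet b t)
  have "inf (inf a s) (inf b t) = inf (inf a b) (inf s t)" by (simp add: inf_aci)
  moreover have "inf a b \<in> A" "inf s t \<in> S"
    using meet subalgebra_inf[OF A] subalgebra_inf[OF S] by simp_all
  ultimately show ?case using meet_joins.meet by simp
qed (simp_all add: inf_sup_distrib1 meet_joins.intros)

lemma meet_joins_inf: "x \<in> meet_joins A S \<Longrightarrow> y \<in> meet_joins A S \<Longrightarrow> inf x y \<in> meet_joins A S"
  by (induction rule: meet_joins.induct)
     (simp_all add: inf_sup_distrib2 meet_joins.intros meet_joins_inf_meet)

lemma meet_joins_compl: "x \<in> meet_joins A S \<Longrightarrow> - x \<in> meet_joins A S"
proof (induction rule: meet_joins.induct)
  case (meet a s)
  have "- inf a s = sup (inf (- a) top) (inf top (- s))" by simp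
  moreover have "inf (- a) top \<in> meet_joins A S" "inf top (- s) \<in> meet_joins A S"
    using meet_joins.meet[OF subalgebra_compl[OF A meet(1)] subalgebra_top[OF S]]
      meet_joins.meet[OF subalgebra_top[OF A] subalgebra_compl[OF S meet(2)]] by simp_all
  ultimately show ?case using meet_joins.join by simp
qed (simp_all add: meet_joins_top meet_joins_inf)

lemma subalgebra_meet_joins: "subalgebra (meet_joins A S)"
  unfolding subalgebra_def
  by (simp add: meet_joins.bot meet_joins_top meet_joins.join meet_joins_inf meet_joins_compl)

lemma generated_Un_subset_meet_joins: "generated (A \<union> S) \<subseteq> meet_joins A S"
proof (rule generated_minimal[OF subalgebra_meet_joins])
  show "A \<union> S \<subseteq> meet_joins A S"
    using meet_joins.meet[of _ A top S] meet_joins.meet[of top A _ S]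
      subalgebra_top[OF A] subalgebra_top[OF S] by fastforce
qed

end

lemma generated_Un_induct [consumes 3, case_names bot meet join]:
  assumes "subalgebra A" "subalgebra S" "x \<in> generated (A \<union> S)"
    and "P bot" and "\<And>a s. a \<in> A \<Longrightarrow> s \<in> S \<Longrightarrow> P (inf a s)"
    and "\<And>x y. P x \<Longrightarrow> P y \<Longrightarrow> P (sup x y)"
  shows "P x"
proof -
  have "x \<in> meet_joins A S" using generated_Un_subset_meet_joins assms(1-3) by blast
  thus ?thesis using assms(4-6) by (induction rule: meet_joins.induct) auto
qed

section \<open>Commuting over a subalgebra\<close>

text \<open>A relative form of \<open>commute\<close>, in which the separating elements are taken from a
  third algebra \<open>E\<close>; subalgebras \<open>A\<close>, \<open>S\<close> commute iff they commute over \<open>A \<inter> S\<close>.\<close>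

definition commute_over :: "'a::boolean_algebra set \<Rightarrow> 'a set \<Rightarrow> 'a set \<Rightarrow> bool" where
  "commute_over A C E \<longleftrightarrow>
     (\<forall>a\<in>A. \<forall>c\<in>C. inf a c = bot \<longrightarrow> (\<exists>e\<in>E. a \<le> e \<and> inf e c = bot))"

lemma commute_overD:
  "commute_over A C E \<Longrightarrow> a \<in> A \<Longrightarrow> c \<in> C \<Longrightarrow> inf a c = bot \<Longrightarrow>
     \<exists>e\<in>E. a \<le> e \<and> inf e c = bot"
  unfolding commute_over_def by blast

lemma commute_imp_commute_over: "commute A S \<Longrightarrow> commute_over A S (A \<inter> S)"
  unfolding commute_def commute_over_def
proof (intro ballI impI)
  fix a s assume "\<forall>a\<in>A. \<forall>s\<in>S. inf a s = bot \<longrightarrow>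
      (\<exists>b1\<in>A \<inter> S. \<exists>b2\<in>A \<inter> S. a \<le> b1 \<and> s \<le> b2 \<and> inf b1 b2 = bot)"
    and "a \<in> A" "s \<in> S" "inf a s = bot"
  then obtain b1 b2 where "b1 \<in> A \<inter> S" "a \<le> b1" "s \<le> b2" "inf b1 b2 = bot" by blast
  moreover from this have "inf b1 s = bot" by (metis inf_mono order_refl le_bot)
  ultimately show "\<exists>e\<in>A \<inter> S. a \<le> e \<and> inf e s = bot" by blast
qed

lemma commute_over_sym:
  assumes "commute_over A C E" "subalgebra E"
  shows "commute_over C A E"
  unfolding commute_over_def
proof (intro ballI impI)
  fix c a assume "c \<in> C" "a \<in> A" "inf c a = bot"
  then obtain e where e: "e \<in> E" "a \<le> e" "inf e c = bot"
    using commute_overD[OF assms(1)] by (metis inf_commute)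
  have "c \<le> - e" "inf (- e) a = bot"
    using e(2,3) by (simp_all add: inf_shunt inf_commute)
  thus "\<exists>e\<in>E. c \<le> e \<and> inf e a = bot" using subalgebra_compl[OF assms(2) e(1)] by blast
qed

lemma commute_over_trivial: "A \<subseteq> E \<Longrightarrow> commute_over A C E"
  unfolding commute_over_def by blast

lemma commute_over_mono:
  "commute_over A C E \<Longrightarrow> A' \<subseteq> A \<Longrightarrow> C' \<subseteq> C \<Longrightarrow> E \<subseteq> E' \<Longrightarrow> commute_over A' C' E'"
  unfolding commute_over_def by blast

lemma commute_over_generated_Un:
  assumes A: "subalgebra A" and S: "subalgebra S" and E: "subalgebra E"
    and meet: "\<And>a s c. a \<in> A \<Longrightarrow> s \<in> S \<Longrightarrow> c \<in> C \<Longrightarrow> inf (inf a s) c = bot \<Longrightarrow>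
                 \<exists>e\<in>E. inf a s \<le> e \<and> inf e c = bot"
  shows "commute_over (generated (A \<union> S)) C E"
  unfolding commute_over_def
proof (intro ballI)
  fix x c assume x: "x \<in> generated (A \<union> S)" and c: "c \<in> C"
  from A S x show "inf x c = bot \<longrightarrow> (\<exists>e\<in>E. x \<le> e \<and> inf e c = bot)"
  proof (induction rule: generated_Un_induct)
    case bot
    show ?case using subalgebra_bot[OF E] by (intro impI bexI[of _ bot]) simp_all
  next
    case (meet a s)
    thus ?case using c by (blast intro: assms(4))
  next
    case (join x y)
    show ?case
    proof
      assume "inf (sup x y) c = bot"
      hence "inf x c = bot" "inf y c = bot" by (simp_all add: inf_sup_distrib2)
      then obtain e1 e2 where e: "e1 \<in> E" "x \<le> e1" "inf e1 c = bot" "e2 \<in> E" "y \<le> e2" "inf e2 c = bot"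
        using join.IH by blast
      have "sup e1 e2 \<in> E" using e(1,4) by (rule subalgebra_sup[OF E])
      moreover have "sup x y \<le> sup e1 e2" using e(2,5) by (rule sup_mono)
      moreover have "inf (sup e1 e2) c = bot" using e(3,6) by (simp add: inf_sup_distrib2)
      ultimately show "\<exists>e\<in>E. sup x y \<le> e \<and> inf e c = bot" by blast
    qed
  qed
qed

text \<open>The push-out step of a tight filtration, abstracted: \<open>S\<close> commutes with the ambient
  \<open>B\<close> over \<open>R \<subseteq> A\<close>, and \<open>S\<close> is adjoined to \<open>A\<close>, or to both \<open>A\<close> and \<open>C\<close>.\<close>

locale adjoining =
  fixes B S R A C F :: "'a::boolean_algebra set"
  assumes subalgebras: "subalgebra B" "subalgebra S" "subalgebra A" "subalgebra C" "subalgebra F"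
    and B_S_R: "commute_over B S R"
    and R_A: "R \<subseteq> A" and A_B: "A \<subseteq> B" and C_B: "C \<subseteq> B"
    and A_C_F: "commute_over A C F"
begin

text \<open>The key separation: if \<open>a \<sqinter> s \<sqinter> c = 0\<close>, the element \<open>r \<in> R\<close> separating
  \<open>a \<sqinter> c\<close> from \<open>s\<close> lets \<open>a \<sqinter> -r \<in> A\<close> take over the role of \<open>a \<sqinter> s\<close>.\<close>

lemma separate_meet:
  assumes a: "a \<in> A" and c: "c \<in> C" and s: "s \<in> S" and asc: "inf (inf a c) s = bot"
  shows "\<exists>d\<in>F. inf a s \<le> d \<and> inf d c = bot"
proof -
  have "inf a c \<in> B" using subalgebra_inf[OF subalgebras(1)] a c A_B C_B by blast
  then obtain r where r: "r \<in> R" "inf a c \<le> r" "inf r s = bot"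
    using commute_overD[OF B_S_R _ s asc] by blast
  have "inf a (- r) \<in> A"
    using subalgebra_inf[OF subalgebras(3) a] subalgebra_compl[OF subalgebras(3)] r(1) R_A by blast
  moreover have "inf (inf a c) (- r) = bot" using r(2) by (simp add: inf_shunt)
  hence "inf (inf a (- r)) c = bot" by (simp add: inf_aci)
  ultimately obtain d where d: "d \<in> F" "inf a (- r) \<le> d" "inf d c = bot"
    using commute_overD[OF A_C_F _ c] by blast
  have "s \<le> - r" using r(3) by (metis inf_commute inf_shunt)
  hence "inf a s \<le> inf a (- r)" by (rule inf_mono[OF order_refl])
  thus ?thesis using d order_trans by blast
qed

lemma commute_over_adjoin_left: "commute_over (generated (A \<union> S)) C F"
proof (rule commute_over_generated_Un[OF subalgebras(3,2,5)])
  fix a s c assume "a \<in> A" "s \<in> S" "c \<in> C" "inf (inf a s) c = bot"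
  moreover from this have "inf (inf a c) s = bot" by (simp add: inf_aci)
  ultimately show "\<exists>e\<in>F. inf a s \<le> e \<and> inf e c = bot" by (intro separate_meet)
qed

lemma commute_over_adjoin_both:
  "commute_over (generated (A \<union> S)) (generated (C \<union> S)) (generated (F \<union> S))"
proof (rule commute_over_generated_Un[OF subalgebras(3,2) subalgebra_generated])
  let ?E = "generated (F \<union> S)"
  have E: "subalgebra ?E" by (rule subalgebra_generated)
  have F_E: "F \<subseteq> ?E" and S_E: "S \<subseteq> ?E" using generated_superset[of "F \<union> S"] by blast+
  fix a s x assume a: "a \<in> A" and s: "s \<in> S" and x: "x \<in> generated (C \<union> S)"
  have "commute_over (generated (C \<union> S)) {inf a s} ?E"
  proof (rule commute_over_generated_Un[OF subalgebras(4,2) E])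
    fix c t y assume c: "c \<in> C" and t: "t \<in> S" and "y \<in> {inf a s}"
      and ctas: "inf (inf c t) y = bot"
    hence y: "y = inf a s" by simp
    have "inf (inf a c) (inf s t) = bot" using ctas y by (simp add: inf_aci)
    then obtain d where d: "d \<in> F" "inf a (inf s t) \<le> d" "inf d c = bot"
      using separate_meet[OF a c subalgebra_inf[OF subalgebras(2) s t]] by blast
    let ?e = "inf s (sup d (- t))"
    have "?e \<in> ?E"
      using s t d(1) F_E S_E
      by (intro subalgebra_inf[OF E] subalgebra_sup[OF E] subalgebra_compl[OF E]) blast+
    moreover have "inf (inf a s) t \<le> d" using d(2) by (simp add: inf_assoc)
    hence "inf a s \<le> ?e" by (simp add: shunt1 sup_commute)
    hence "inf (- ?e) (inf a s) = bot" by (metis inf_commute inf_shunt double_compl)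
    moreover have "inf ?e (inf c t) = inf s (inf (inf d c) t)"
      by (simp add: inf_sup_distrib inf_aci)
    hence "inf ?e (inf c t) = bot" using d(3) by simp
    hence "inf c t \<le> - ?e" by (metis inf_commute inf_shunt)
    ultimately show "\<exists>e\<in>?E. inf c t \<le> e \<and> inf e y = bot"
      using subalgebra_compl[OF E] y by blast
  qed
  hence "commute_over {inf a s} (generated (C \<union> S)) ?E" by (rule commute_over_sym[OF _ E])
  thus "inf (inf a s) x = bot \<Longrightarrow> \<exists>e\<in>?E. inf a s \<le> e \<and> inf e x = bot"
    using x unfolding commute_over_def by blast
qed

end

section \<open>Interpolation for Boolean polynomials\<close>

lemma beval_inf_cong:
  "(\<And>i. i \<in> bvars P \<Longrightarrow> inf (v i) x = inf (w i) x) \<Longrightarrow> inf (beval P v) x = inf (beval P w) x"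
proof (induction P)
  case (Meet p q)
  have meet: "inf (inf a b) x = inf (inf a x) (inf b x)" for a b by (simp add: inf_aci)
  have "inf (beval p v) x = inf (beval p w) x" "inf (beval q v) x = inf (beval q w) x"
    using Meet by simp_all
  thus ?case unfolding beval.simps meet[of "beval p v"] meet[of "beval p w"] by simp
next
  case (Join p q)
  thus ?case by (simp add: inf_sup_distrib2)
next
  case (Compl p)
  have compl: "inf (- a) x = inf x (- inf a x)" for a by (simp add: inf_sup_distrib1 inf_aci)
  have "inf (beval p v) x = inf (beval p w) x" using Compl by simp
  thus ?case unfolding beval.simps compl[of "beval p v"] compl[of "beval p w"] by simp
qed simp_all

lemma beval_shannon:
  "beval P (v(n := e)) = sup (inf (beval P (v(n := top))) e) (inf (beval P (v(n := bot))) (- e))"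
proof -
  let ?w = "v(n := e)"
  have "inf (beval P ?w) e = inf (beval P (v(n := top))) e"
    by (rule beval_inf_cong) simp
  moreover have "inf (beval P ?w) (- e) = inf (beval P (v(n := bot))) (- e)"
    by (rule beval_inf_cong) simp
  moreover have "beval P ?w = sup (inf (beval P ?w) e) (inf (beval P ?w) (- e))"
    by (simp add: inf_sup_distrib1[symmetric])
  ultimately show ?thesis by simp
qed

text \<open>The two cofactors of \<open>P\<close> at variable \<open>n\<close> lie in \<open>C\<close>, so commuting over \<open>E\<close> separates
  \<open>v n\<close> and \<open>- v n\<close> from them by elements of \<open>E\<close>.\<close>

lemma commute_over_interpolate_var:
  assumes A: "subalgebra A" and C: "subalgebra C" and E: "subalgebra E"
    and ACE: "commute_over A C E"
    and vn: "v n \<in> A" and vC: "\<And>i. i \<noteq> n \<Longrightarrow> v i \<in> C" and P: "beval P v = bot"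
  shows "\<exists>l u. l \<in> E \<and> u \<in> E \<and> l \<le> v n \<and> v n \<le> u \<and>
           beval P (v(n := l)) = bot \<and> beval P (v(n := u)) = bot"
proof -
  define Q1 where "Q1 = beval P (v(n := top))"
  define Q2 where "Q2 = beval P (v(n := bot))"
  have shannon: "beval P (v(n := e)) = sup (inf Q1 e) (inf Q2 (- e))" for e
    unfolding Q1_def Q2_def by (rule beval_shannon)
  have "Q1 \<in> C" "Q2 \<in> C"
    unfolding Q1_def Q2_def using vC subalgebra_top[OF C] subalgebra_bot[OF C]
    by (auto intro!: beval_in_subalgebra[OF C])
  moreover have Q1_vn: "inf Q1 (v n) = bot" and Q2_vn: "inf Q2 (- v n) = bot"
    using P shannon[of "v n"] by simp_all
  ultimately have "inf (v n) Q1 = bot" "inf (- v n) Q2 = bot"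
    by (metis inf.commute)+
  then obtain u e where u: "u \<in> E" "v n \<le> u" "inf u Q1 = bot"
    and e: "e \<in> E" "- v n \<le> e" "inf e Q2 = bot"
    using commute_overD[OF ACE vn \<open>Q1 \<in> C\<close>] commute_overD[OF ACE subalgebra_compl[OF A vn] \<open>Q2 \<in> C\<close>]
    by blast
  have "inf Q2 (- u) \<le> inf Q2 (- v n)" by (rule inf_mono[OF order_refl compl_mono[OF u(2)]])
  hence "inf Q2 (- u) = bot" using Q2_vn by (simp add: bot_unique)
  moreover have "inf Q1 u = bot" using u(3) by (simp add: inf.commute)
  ultimately have upper: "beval P (v(n := u)) = bot" using shannon[of u] by simp
  have lower: "- e \<le> v n" using e(2) by (rule compl_le_swap2)
  hence "inf Q1 (- e) \<le> inf Q1 (v n)" by (rule inf_mono[OF order_refl])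
  hence "inf Q1 (- e) = bot" using Q1_vn by (simp add: bot_unique)
  moreover have "inf Q2 e = bot" using e(3) by (simp add: inf.commute)
  ultimately have "beval P (v(n := - e)) = bot" using shannon[of "- e"] by simp
  thus ?thesis using upper lower u(1,2) subalgebra_compl[OF E e(1)] by blast
qed

primrec rename_vars :: "(nat \<Rightarrow> nat) \<Rightarrow> bpoly \<Rightarrow> bpoly" where
  "rename_vars f (Var i) = Var (f i)"
| "rename_vars f Zero = Zero"
| "rename_vars f One = One"
| "rename_vars f (Meet p q) = Meet (rename_vars f p) (rename_vars f q)"
| "rename_vars f (Join p q) = Join (rename_vars f p) (rename_vars f q)"
| "rename_vars f (Compl p) = Compl (rename_vars f p)"

lemma beval_rename_vars: "beval (rename_vars f P) v = beval P (v \<circ> f)"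
  by (induction P) auto

lemma beval_double_var:
  "beval (Join P (rename_vars (id(n := k)) P)) w = sup (beval P w) (beval P (w(n := w k)))"
proof -
  have "w \<circ> id(n := k) = w(n := w k)" by auto
  thus ?thesis by (simp add: beval_rename_vars)
qed

lemma fresh_var: "\<exists>k. n < k \<and> k \<notin> bvars P"
proof -
  have "finite (bvars P \<union> {..n})" using finite_bvars by simp
  then obtain k where "k \<notin> bvars P \<union> {..n}"
    using ex_new_if_finite[OF infinite_UNIV_nat] by blast
  thus ?thesis by (intro exI[of _ k]) auto
qed

text \<open>In the induction step
  variable \<open>n\<close> is moved into \<open>E\<close> with an upper bound \<open>u\<close>, while its lower bound \<open>l\<close> is
  stored in a fresh variable \<open>k\<close> of a second copy of \<open>P\<close>: one application of the induction
  hypothesis to the join of both copies then handles both signs of variable \<open>n\<close>.\<close>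

lemma interpolation_upto:
  fixes A :: "nat \<Rightarrow> 'a::boolean_algebra set"
  assumes A: "\<And>i. i < N \<Longrightarrow> subalgebra (A i)" and E: "subalgebra E"
    and comm: "\<And>n. n < N \<Longrightarrow> commute_over (A n) (generated (E \<union> (\<Union>i<n. A i))) E"
  shows "n \<le> N \<Longrightarrow> (\<forall>i<n. v i \<in> A i) \<Longrightarrow> (\<forall>i\<ge>n. v i \<in> E) \<Longrightarrow> beval P v = bot \<Longrightarrow>
    \<exists>rm rp. (\<forall>i<n. rm i \<in> E \<and> rp i \<in> E \<and> rm i \<le> v i \<and> v i \<le> rp i) \<and>
      (\<forall>eps. beval P (\<lambda>i. if i < n then (if eps i then rp i else rm i) else v i) = bot)"
proof (induction n arbitrary: P v)
  case 0
  thus ?case by simp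
next
  case (Suc n)
  have "v i \<in> E \<union> (\<Union>i<n. A i)" if "i \<noteq> n" for i
    using that Suc.prems(2,3) by (cases "i < n") (auto simp: less_Suc_eq)
  hence "v i \<in> generated (E \<union> (\<Union>i<n. A i))" if "i \<noteq> n" for i using that generated_superset by blast
  moreover have nN: "n < N" and "v n \<in> A n" using Suc.prems(1,2) by simp_all
  ultimately obtain l u where lu: "l \<in> E" "u \<in> E" "l \<le> v n" "v n \<le> u"
    "beval P (v(n := l)) = bot" "beval P (v(n := u)) = bot"
    using commute_over_interpolate_var[OF A[OF nN] subalgebra_generated E comm[OF nN]] Suc.prems(4)
    by blast
  obtain k where k: "n < k" "k \<notin> bvars P" using fresh_var by blast
  let ?P2 = "Join P (rename_vars (id(n := k)) P)"
  define v' where "v' = v(n := u, k := l)"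
  have "beval P v' = beval P (v(n := u))" "beval P (v'(n := v' k)) = beval P (v(n := l))"
    using k by (auto simp: v'_def intro!: beval_cong)
  hence "beval ?P2 v' = bot" using lu(5,6) by (simp only: beval_double_var) simp
  moreover have "\<forall>i<n. v' i \<in> A i" "\<forall>i\<ge>n. v' i \<in> E"
    using Suc.prems(2,3) k lu(1,2) by (auto simp: v'_def)
  ultimately obtain rm rp where
    r: "\<forall>i<n. rm i \<in> E \<and> rp i \<in> E \<and> rm i \<le> v' i \<and> v' i \<le> rp i" and
    eps: "\<And>eps. beval ?P2 (\<lambda>i. if i < n then (if eps i then rp i else rm i) else v' i) = bot"
    using Suc.IH[OF Suc_leD[OF Suc.prems(1)]] by blast
  have "\<forall>i<Suc n. (rm(n := l)) i \<in> E \<and> (rp(n := u)) i \<in> E \<and> (rm(n := l)) i \<le> v i \<and> v i \<le> (rp(n := u)) i"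
    using r lu k by (auto simp: v'_def less_Suc_eq)
  moreover have "beval P (\<lambda>i. if i < Suc n then (if eps i then (rp(n := u)) i else (rm(n := l)) i)
      else v i) = bot" for eps
  proof -
    define W where "W = (\<lambda>i. if i < n then (if eps i then rp i else rm i) else v' i)"
    have "sup (beval P W) (beval P (W(n := W k))) = bot"
      using eps[of eps] unfolding W_def[symmetric] beval_double_var .
    hence W: "beval P W = bot" "beval P (W(n := W k)) = bot" by simp_all
    have "beval P (\<lambda>i. if i < Suc n then (if eps i then (rp(n := u)) i else (rm(n := l)) i)
        else v i) = beval P (if eps n then W else W(n := W k))"
      using k by (intro beval_cong) (auto simp: W_def v'_def)
    thus ?thesis using W by simp
  qed
  ultimately show ?case by blast
qed

lemma interpolation:
  fixes A :: "nat \<Rightarrow> 'a::boolean_algebra set"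
  assumes A: "\<And>i. i < n \<Longrightarrow> subalgebra (A i)" and E: "subalgebra E"
    and comm: "\<And>m. m < n \<Longrightarrow> commute_over (A m) (generated (E \<union> (\<Union>i<m. A i))) E"
    and P: "bvars P \<subseteq> {..<n}" and v: "\<forall>i<n. v i \<in> A i" and Pv: "beval P v = bot"
  shows "\<exists>rm rp. (\<forall>i<n. rm i \<in> E \<and> rp i \<in> E \<and> rm i \<le> v i \<and> v i \<le> rp i) \<and>
           (\<forall>eps. beval P (\<lambda>i. if eps i then rp i else rm i) = bot)"
proof -
  define v' where "v' i = (if i < n then v i else bot)" for i
  have "beval P v' = beval P v" using P by (intro beval_cong) (auto simp: v'_def)
  hence "beval P v' = bot" using Pv by simp
  moreover have "\<forall>i<n. v' i \<in> A i" "\<forall>i\<ge>n. v' i \<in> E"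
    using v subalgebra_bot[OF E] by (auto simp: v'_def)
  ultimately obtain rm rp where
    "\<forall>i<n. rm i \<in> E \<and> rp i \<in> E \<and> rm i \<le> v' i \<and> v' i \<le> rp i"
    "\<And>eps. beval P (\<lambda>i. if i < n then (if eps i then rp i else rm i) else v' i) = bot"
    using interpolation_upto[OF A E comm order_refl] by blast
  moreover have "beval P (\<lambda>i. if eps i then rp i else rm i) =
      beval P (\<lambda>i. if i < n then (if eps i then rp i else rm i) else v' i)" for eps
    using P by (intro beval_cong) auto
  ultimately show ?thesis by (auto simp: v'_def)
qed

section \<open>A weak \<open>\<Delta>\<close>-system lemma for \<open>\<omega>\<^sub>2\<close> countable sets\<close>

unbundle cardinal_syntax

abbreviation omega1 :: "nat set rel" where
  "omega1 \<equiv> cardSuc natLeq"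

lemma Card_order_omega1: "Card_order omega1"
  by (simp add: cardSuc_Card_order natLeq_Card_order)

lemma infinite_Field_omega1: "\<not> finite (Field omega1)"
  using Cinfinite_cardSuc[OF natLeq_Cinfinite] unfolding cinfinite_def by simp

lemma countable_iff_ordLeq_natLeq: "countable A \<longleftrightarrow> |A| \<le>o natLeq"
  using countable_card_of_nat card_of_nat ordLeq_ordIso_trans ordIso_symmetric by metis

lemma card_of_ordLess_omega1_iff: "|A| <o omega1 \<longleftrightarrow> countable A"
  using cardSuc_ordLeq_ordLess[OF natLeq_Card_order card_of_Card_order]
  by (simp add: countable_iff_ordLeq_natLeq)

lemma countable_imp_ordLeq_omega1: "countable A \<Longrightarrow> |A| \<le>o omega1"
  using card_of_ordLess_omega1_iff ordLess_imp_ordLeq by blast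

lemma card_of_ordLess_omega2_iff: "|A| <o cardSuc omega1 \<longleftrightarrow> |A| \<le>o omega1"
  using cardSuc_ordLeq_ordLess[OF Card_order_omega1 card_of_Card_order] by blast

lemma UN_ordLeq_omega1:
  "|I| \<le>o omega1 \<Longrightarrow> (\<And>i. i \<in> I \<Longrightarrow> |A i| \<le>o omega1) \<Longrightarrow> |\<Union>i\<in>I. A i| \<le>o omega1"
  using card_of_UNION_ordLeq_infinite_Field[OF infinite_Field_omega1 Card_order_omega1] by blast

lemma insert_ordLeq_omega1:
  assumes "|A| \<le>o omega1"
  shows "|insert a A| \<le>o omega1"
proof -
  have "|{a}| \<le>o omega1" by (rule countable_imp_ordLeq_omega1) simp
  hence "|{a} \<union> A| \<le>o omega1"
    using card_of_Un_ordLeq_infinite_Field[OF infinite_Field_omega1 _ assms Card_order_omega1] by blast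
  thus ?thesis by simp
qed

lemma card_of_Field_omega1: "|Field omega1| =o omega1"
  by (rule card_of_Field_ordIso[OF Card_order_omega1])

lemma uncountable_Field_omega1: "\<not> countable (Field omega1)"
  using card_of_ordLess_omega1_iff ordLess_irreflexive
    ordIso_ordLess_trans[OF ordIso_symmetric[OF card_of_Field_omega1]] by blast

lemma countable_underS_omega1: "countable (underS omega1 a)"
proof (cases "a \<in> Field omega1")
  case True
  thus ?thesis
    using card_of_underS[OF Card_order_omega1] card_of_ordLess_omega1_iff by blast
next
  case False
  hence "underS omega1 a = {}" unfolding underS_def Field_def by blast
  thus ?thesis by simp
qed

lemma uncountable_imp_omega1_subset:
  assumes "\<not> |K| \<le>o omega1"
  shows "\<exists>K0\<subseteq>K. |K0| \<le>o omega1 \<and> \<not> countable K0"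
proof -
  have "omega1 <o |K|"
    using assms not_ordLeq_iff_ordLess[OF card_order_on_well_order_on[OF Card_order_omega1]
        card_of_Well_order] by blast
  hence "|Field omega1| \<le>o |K|"
    using ordIso_ordLeq_trans[OF card_of_Field_omega1 ordLess_imp_ordLeq] by blast
  then obtain g where g: "inj_on g (Field omega1)" "g ` Field omega1 \<subseteq> K"
    unfolding card_of_ordLeq[symmetric] by blast
  have "|g ` Field omega1| \<le>o omega1"
    using ordLeq_ordIso_trans[OF card_of_image card_of_Field_omega1] .
  moreover have "\<not> countable (g ` Field omega1)"
    using uncountable_Field_omega1 countable_image_inj_on[OF _ g(1)] by blast
  ultimately show ?thesis using g(2) by blast
qed

lemma ordIso_omega2_subset:
  assumes "|H| =o cardSuc omega1" and "B \<subseteq> H" and "\<not> |B| \<le>o omega1"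
  shows "|B| =o cardSuc omega1"
proof -
  have "omega1 <o |B|"
    using assms(3) not_ordLeq_iff_ordLess[OF card_order_on_well_order_on[OF Card_order_omega1]
        card_of_Well_order] by blast
  hence "cardSuc omega1 \<le>o |B|"
    using cardSuc_ordLess_ordLeq[OF Card_order_omega1 card_of_Card_order] by blast
  moreover have "|B| \<le>o cardSuc omega1"
    using ordLeq_ordIso_trans[OF card_of_mono1[OF assms(2)] assms(1)] .
  ultimately show ?thesis using ordIso_iff_ordLeq by blast
qed

lemma exists_strict_upper_bound:
  assumes r: "Card_order r" and k: "Card_order k" "\<not> finite (Field k)"
    and seg: "\<And>a. a \<in> Field r \<Longrightarrow> |underS r a| \<le>o k"
    and large: "\<not> |Field r| \<le>o k"
    and X: "X \<subseteq> Field r" "|X| \<le>o k"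
  shows "\<exists>y\<in>Field r. X \<subseteq> underS r y"
proof -
  let ?U = "X \<union> (\<Union>x\<in>X. underS r x)"
  have "|\<Union>x\<in>X. underS r x| \<le>o k"
    using card_of_UNION_ordLeq_infinite_Field[OF k(2,1) X(2)] seg X(1) by blast
  hence "|?U| \<le>o k" using card_of_Un_ordLeq_infinite_Field[OF k(2) X(2)] k(1) by blast
  hence "\<not> Field r \<subseteq> ?U" using large card_of_mono1 ordLeq_transitive by blast
  then obtain y where y: "y \<in> Field r" "y \<notin> ?U" by blast
  have "x \<in> underS r y" if "x \<in> X" for x
    using y that X(1) wo_rel.TOTALS[OF Card_order_wo_rel[OF r]] unfolding underS_def by blast
  thus ?thesis using y(1) by blast
qed

lemma large_fiber:
  assumes "\<not> |G| \<le>o omega1" and "b ` G \<subseteq> Field omega1"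
  shows "\<exists>c. \<not> |{g\<in>G. b g = c}| \<le>o omega1"
proof (rule ccontr)
  assume "\<not> ?thesis"
  hence "|\<Union>c\<in>Field omega1. {g\<in>G. b g = c}| \<le>o omega1"
    by (intro UN_ordLeq_omega1[OF ordIso_imp_ordLeq[OF card_of_Field_omega1]]) blast
  moreover have "(\<Union>c\<in>Field omega1. {g\<in>G. b g = c}) = G" using assms(2) by blast
  ultimately show False using assms(1) by simp
qed

text \<open>Inside \<open>\<omega>\<^sub>1\<close> every countable set is bounded, and the bound takes only \<open>\<omega>\<^sub>1\<close> values.\<close>

lemma pigeonhole_countable_subsets:
  assumes W: "|W| \<le>o omega1" and G: "\<not> |G| \<le>o omega1"
    and S: "\<And>g. g \<in> G \<Longrightarrow> countable (S g) \<and> S g \<subseteq> W"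
  shows "\<exists>G'\<subseteq>G. \<not> |G'| \<le>o omega1 \<and> (\<exists>D. countable D \<and> (\<forall>g\<in>G'. S g \<subseteq> D))"
proof -
  have "|W| \<le>o |Field omega1|"
    using ordLeq_ordIso_trans[OF W ordIso_symmetric[OF card_of_Field_omega1]] .
  then obtain f where f: "inj_on f W" "f ` W \<subseteq> Field omega1"
    unfolding card_of_ordLeq[symmetric] by blast
  have "\<exists>c\<in>Field omega1. f ` S g \<subseteq> underS omega1 c" if "g \<in> G" for g
  proof (rule exists_strict_upper_bound[OF Card_order_omega1 natLeq_Card_order])
    show "|underS omega1 a| \<le>o natLeq" for a
      using countable_underS_omega1 countable_iff_ordLeq_natLeq by blast
    show "\<not> |Field omega1| \<le>o natLeq"
      using uncountable_Field_omega1 countable_iff_ordLeq_natLeq by blast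
    show "f ` S g \<subseteq> Field omega1" "|f ` S g| \<le>o natLeq"
      using f S[OF that] countable_iff_ordLeq_natLeq by auto
  qed (simp add: Field_natLeq)
  then obtain b where b: "\<And>g. g \<in> G \<Longrightarrow> b g \<in> Field omega1 \<and> f ` S g \<subseteq> underS omega1 (b g)"
    by metis
  then obtain c where c: "\<not> |{g\<in>G. b g = c}| \<le>o omega1"
    using large_fiber[OF G] by blast
  define D where "D = {x\<in>W. f x \<in> underS omega1 c}"
  have "countable (f ` D)" unfolding D_def
    using countable_underS_omega1 by (rule countable_subset[rotated]) blast
  hence "countable D" by (rule countable_image_inj_on) (use f(1) in \<open>auto simp: D_def inj_on_def\<close>)
  moreover have "S g \<subseteq> D" if "g \<in> G" "b g = c" for g
    using b[OF that(1)] S[OF that(1)] that(2) unfolding D_def by blast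
  ultimately show ?thesis using c by (intro exI[of _ "{g\<in>G. b g = c}"]) blast
qed

locale omega2_order =
  fixes r :: "'b rel"
  assumes Card_order: "Card_order r" and ordIso_omega2: "r =o cardSuc omega1"
begin

sublocale wo_rel r
  using Card_order by (rule Card_order_wo_rel)

abbreviation below (infix "\<prec>" 50) where
  "x \<prec> y \<equiv> x \<in> underS y"

lemma below_Field: "x \<prec> y \<Longrightarrow> x \<in> Field r \<and> y \<in> Field r"
  unfolding underS_def Field_def by blast

lemma below_irrefl: "\<not> x \<prec> x"
  unfolding underS_def by blast

lemma below_le_trans: "x \<prec> y \<Longrightarrow> (y, z) \<in> r \<Longrightarrow> x \<prec> z"
  using TRANS ANTISYM unfolding underS_def trans_def antisym_def by blast

lemma below_trans: "x \<prec> y \<Longrightarrow> y \<prec> z \<Longrightarrow> x \<prec> z"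
  using below_le_trans unfolding underS_def by blast

lemma below_linear: "x \<in> Field r \<Longrightarrow> y \<in> Field r \<Longrightarrow> x \<prec> y \<or> x = y \<or> y \<prec> x"
  using TOTALS unfolding underS_def by blast

lemma not_below_iff: "x \<in> Field r \<Longrightarrow> y \<in> Field r \<Longrightarrow> \<not> x \<prec> y \<longleftrightarrow> (y, x) \<in> r"
  using below_linear REFL below_irrefl below_le_trans
  unfolding underS_def refl_on_def by blast

lemma card_of_underS_ordLeq: "|underS a| \<le>o omega1"
proof (cases "a \<in> Field r")
  case True
  have "|underS a| <o cardSuc omega1"
    using ordLess_ordIso_trans[OF card_of_underS[OF Card_order True] ordIso_omega2] .
  thus ?thesis by (simp add: card_of_ordLess_omega2_iff)
next
  case False
  hence "underS a = {}" using below_Field by blast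
  thus ?thesis using countable_imp_ordLeq_omega1[of "{}"] by simp
qed

lemma not_card_of_Field_ordLeq: "\<not> |Field r| \<le>o omega1"
proof
  assume "|Field r| \<le>o omega1"
  hence "cardSuc omega1 \<le>o omega1"
    using ordIso_ordLeq_trans[OF ordIso_transitive[OF ordIso_symmetric[OF ordIso_omega2]
          ordIso_symmetric[OF card_of_Field_ordIso[OF Card_order]]]] by blast
  thus False using cardSuc_greater[OF Card_order_omega1] not_ordLess_ordLeq by blast
qed

lemma strict_upper_bound: "X \<subseteq> Field r \<Longrightarrow> |X| \<le>o omega1 \<Longrightarrow> \<exists>y\<in>Field r. X \<subseteq> underS y"
  by (rule exists_strict_upper_bound[OF Card_order Card_order_omega1 infinite_Field_omega1
      card_of_underS_ordLeq not_card_of_Field_ordLeq])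

lemma unbounded_not_ordLeq_omega1:
  assumes "K \<subseteq> Field r" and "\<And>a. a \<in> Field r \<Longrightarrow> \<exists>k\<in>K. (a, k) \<in> r"
  shows "\<not> |K| \<le>o omega1"
proof
  assume "|K| \<le>o omega1"
  then obtain y where y: "y \<in> Field r" "K \<subseteq> underS y"
    using strict_upper_bound[OF assms(1)] by blast
  then obtain k where "k \<in> K" "(y, k) \<in> r" using assms(2) by blast
  hence "k \<prec> k" using y(2) below_le_trans by blast
  thus False using below_irrefl by blast
qed

lemma exists_sup_seq:
  fixes s :: "nat \<Rightarrow> 'b"
  assumes s: "range s \<subseteq> Field r"
  shows "\<exists>k\<in>Field r. (\<forall>n. (s n, k) \<in> r) \<and> (\<forall>x. x \<prec> k \<longrightarrow> (\<exists>n. x \<prec> s n))"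
proof -
  have "countable (range s)" by simp
  then obtain y where y: "y \<in> Field r" "range s \<subseteq> underS y"
    using strict_upper_bound[OF s] countable_imp_ordLeq_omega1 by blast
  define UB where "UB = {u\<in>Field r. \<forall>n. (s n, u) \<in> r}"
  have UB_Field: "UB \<subseteq> Field r" unfolding UB_def by blast
  have "s n \<in> underS y" for n using y(2) by (rule subsetD) (rule rangeI)
  hence "(s n, y) \<in> r" for n by (simp add: Order_Relation.underS_def)
  hence "y \<in> UB" using y(1) unfolding UB_def by blast
  hence k: "minim UB \<in> UB" "\<And>u. u \<in> UB \<Longrightarrow> (minim UB, u) \<in> r"
    using minim_in[OF UB_Field] minim_least[OF UB_Field] by blast+
  have "\<exists>n. x \<prec> s n" if x: "x \<prec> minim UB" for x
  proof -
    have x_Field: "x \<in> Field r" using below_Field[OF x] by blast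
    have "x \<notin> UB"
    proof
      assume "x \<in> UB"
      hence "x \<prec> x" by (rule below_le_trans[OF x k(2)])
      thus False using below_irrefl by blast
    qed
    then obtain n where "(s n, x) \<notin> r" using x_Field unfolding UB_def by blast
    moreover have "s n \<in> Field r" using s by blast
    ultimately show ?thesis using not_below_iff[OF x_Field] by blast
  qed
  thus ?thesis using k(1) unfolding UB_def by blast
qed

text \<open>The supremum of an \<open>\<omega>\<close>-sequence that jumps over the \<open>g\<close>-images at each step is
  closed under \<open>g\<close>.\<close>

lemma closure_point_above:
  assumes g: "g ` Field r \<subseteq> Field r" and a: "a \<in> Field r"
  shows "\<exists>k\<in>Field r. (a, k) \<in> r \<and> (\<forall>x. x \<prec> k \<longrightarrow> g x \<prec> k)"
proof -
  have "\<exists>y\<in>Field r. insert b (g ` underS b) \<subseteq> underS y" if "b \<in> Field r" for b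
  proof (rule strict_upper_bound)
    show "insert b (g ` underS b) \<subseteq> Field r"
      using that g Order_Relation.underS_Field[of r b] by blast
    show "|insert b (g ` underS b)| \<le>o omega1"
      by (rule insert_ordLeq_omega1[OF ordLeq_transitive[OF card_of_image card_of_underS_ordLeq]])
  qed
  hence "\<forall>b\<in>Field r. \<exists>y. y \<in> Field r \<and> insert b (g ` underS b) \<subseteq> underS y" by blast
  then obtain nxt where nxt: "\<forall>b\<in>Field r.
      nxt b \<in> Field r \<and> insert b (g ` underS b) \<subseteq> underS (nxt b)"
    by (rule bchoice[elim_format]) blast
  define s where "s n = (nxt ^^ n) a" for n
  have s_Field: "s n \<in> Field r" for n by (induction n) (simp_all add: s_def a nxt)
  have s_Suc: "insert (s n) (g ` underS (s n)) \<subseteq> underS (s (Suc n))" for n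
    using nxt s_Field[of n] by (simp add: s_def)
  have "range s \<subseteq> Field r" using s_Field by blast
  then obtain k where k: "k \<in> Field r" "\<forall>n. (s n, k) \<in> r" "\<forall>x. x \<prec> k \<longrightarrow> (\<exists>n. x \<prec> s n)"
    using exists_sup_seq by blast
  have "g x \<prec> k" if x: "x \<prec> k" for x
  proof -
    obtain n where "x \<prec> s n" using k(3) x by blast
    hence "g x \<prec> s (Suc n)" using s_Suc by blast
    thus ?thesis using k(2) below_le_trans by blast
  qed
  moreover have "(a, k) \<in> r" using k(2)[rule_format, of 0] by (simp add: s_def)
  ultimately show ?thesis using k(1) by blast
qed

lemma closure_points_not_ordLeq_omega1:
  assumes "g ` Field r \<subseteq> Field r"
  shows "\<not> |{k\<in>Field r. \<forall>x. x \<prec> k \<longrightarrow> g x \<prec> k}| \<le>o omega1"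
proof (rule unbounded_not_ordLeq_omega1)
  fix a assume "a \<in> Field r"
  then obtain k where "k \<in> Field r" "(a, k) \<in> r" "\<forall>x. x \<prec> k \<longrightarrow> g x \<prec> k"
    using closure_point_above[OF assms] by blast
  thus "\<exists>k\<in>{k\<in>Field r. \<forall>x. x \<prec> k \<longrightarrow> g x \<prec> k}. (a, k) \<in> r" by blast
qed blast

lemma exists_uncountable_below:
  assumes K: "K \<subseteq> Field r" and large: "\<not> |K| \<le>o omega1"
  shows "\<exists>y\<in>Field r. \<not> countable (K \<inter> underS y)"
proof -
  obtain K0 where K0: "K0 \<subseteq> K" "|K0| \<le>o omega1" "\<not> countable K0"
    using uncountable_imp_omega1_subset[OF large] by blast
  have "K0 \<subseteq> Field r" using K0(1) K by blast
  then obtain y where y: "y \<in> Field r" "K0 \<subseteq> underS y"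
    using strict_upper_bound[OF _ K0(2)] by blast
  have "K0 \<subseteq> K \<inter> underS y" using K0(1) y(2) by blast
  hence "\<not> countable (K \<inter> underS y)" using K0(3) countable_subset by blast
  thus ?thesis using y(1) by blast
qed

text \<open>\<open>\<zeta>\<close> is the least point with uncountably many elements of \<open>K\<close> below it.\<close>

lemma exists_omega1_limit_point:
  assumes K: "K \<subseteq> Field r" and large: "\<not> |K| \<le>o omega1"
  shows "\<exists>\<zeta>\<in>Field r. \<forall>A. A \<subseteq> underS \<zeta> \<longrightarrow> countable A \<longrightarrow> (\<exists>k\<in>K. k \<prec> \<zeta> \<and> (\<forall>a\<in>A. a \<prec> k))"
proof -
  define Z where "Z = {z\<in>Field r. \<not> countable (K \<inter> underS z)}"
  have Z_Field: "Z \<subseteq> Field r" unfolding Z_def by blast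
  have "Z \<noteq> {}" using exists_uncountable_below[OF K large] unfolding Z_def by blast
  hence \<zeta>: "minim Z \<in> Z" "\<And>z. z \<in> Z \<Longrightarrow> (minim Z, z) \<in> r"
    using minim_in[OF Z_Field] minim_least[OF Z_Field] by blast+
  let ?\<zeta> = "minim Z"
  have below: "countable (K \<inter> underS a)" if a: "a \<prec> ?\<zeta>" for a
  proof (rule ccontr)
    assume "\<not> countable (K \<inter> underS a)"
    hence "a \<in> Z" using below_Field[OF a] unfolding Z_def by blast
    hence "a \<prec> a" by (rule below_le_trans[OF a \<zeta>(2)])
    thus False using below_irrefl by blast
  qed
  have "\<exists>k\<in>K. k \<prec> ?\<zeta> \<and> (\<forall>a\<in>A. a \<prec> k)" if A: "A \<subseteq> underS ?\<zeta>" "countable A" for A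
  proof -
    let ?U = "\<Union>a\<in>A. insert a (K \<inter> underS a)"
    have "countable ?U" using A below by (intro countable_UN) auto
    moreover have "\<not> countable (K \<inter> underS ?\<zeta>)" using \<zeta>(1) unfolding Z_def by blast
    ultimately have "\<not> K \<inter> underS ?\<zeta> \<subseteq> ?U" by (meson countable_subset)
    then obtain k where k: "k \<in> K" "k \<prec> ?\<zeta>" "k \<notin> ?U" by blast
    have "a \<prec> k" if a: "a \<in> A" for a
    proof -
      have "a \<in> Field r" using below_Field[OF subsetD[OF A(1) a]] by blast
      moreover have "k \<in> Field r" using below_Field[OF k(2)] by blast
      ultimately have "a \<prec> k \<or> a = k \<or> k \<prec> a" by (rule below_linear)
      thus ?thesis using k(1,3) a by blast
    qed
    thus ?thesis using k(1,2) by blast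
  qed
  thus ?thesis using \<zeta>(1) Z_Field by blast
qed

end

locale omega2_family = omega2_order r for r :: "'b rel" +
  fixes F :: "'b \<Rightarrow> 'c set"
  assumes countable_F: "\<And>h. h \<in> Field r \<Longrightarrow> countable (F h)"
begin

definition W :: "'b \<Rightarrow> 'c set" where
  "W \<eta> = (\<Union>\<xi>\<in>underS \<eta>. F \<xi>)"

text \<open>\<open>\<eta>\<close> absorbs \<open>\<xi>\<close> when the part of \<open>F \<xi>\<close> that is not new at stage \<open>\<xi>\<close> was
  already present at stage \<open>\<eta>\<close>.\<close>

definition absorbed :: "'b \<Rightarrow> 'b set" where
  "absorbed \<eta> = {\<xi>\<in>Field r. F \<xi> \<inter> W \<xi> \<subseteq> W \<eta>}"

lemma card_of_W_ordLeq: "|W \<eta>| \<le>o omega1"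
  unfolding W_def
proof (rule UN_ordLeq_omega1[OF card_of_underS_ordLeq])
  fix \<xi> assume "\<xi> \<prec> \<eta>"
  hence "countable (F \<xi>)" using countable_F below_Field by blast
  thus "|F \<xi>| \<le>o omega1" by (rule countable_imp_ordLeq_omega1)
qed

text \<open>If every \<open>\<eta>\<close> absorbed at most \<open>\<omega>\<^sub>1\<close> indices, some \<open>hh \<eta>\<close> would lie above all of
  them. At a point \<open>\<zeta>\<close> of cofinality \<open>\<omega>\<^sub>1\<close> among the closure points of \<open>hh\<close>, the
  countable set \<open>F \<zeta> \<inter> W \<zeta>\<close> is already contained in some \<open>W k\<close> with \<open>k < \<zeta>\<close> closed,
  so \<open>\<zeta>\<close> is absorbed by \<open>k\<close> and hence \<open>\<zeta> < hh k < \<zeta>\<close>.\<close>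

lemma exists_large_absorbed: "\<exists>\<eta>\<in>Field r. \<not> |absorbed \<eta>| \<le>o omega1"
proof (rule ccontr)
  assume small: "\<not> ?thesis"
  have "\<exists>y. y \<in> Field r \<and> insert \<eta> (absorbed \<eta>) \<subseteq> underS y" if \<eta>: "\<eta> \<in> Field r" for \<eta>
  proof -
    have "insert \<eta> (absorbed \<eta>) \<subseteq> Field r" using \<eta> unfolding absorbed_def by blast
    moreover have "|absorbed \<eta>| \<le>o omega1" using small \<eta> by blast
    hence "|insert \<eta> (absorbed \<eta>)| \<le>o omega1" by (rule insert_ordLeq_omega1)
    ultimately show ?thesis using strict_upper_bound by blast
  qed
  then obtain hh where hh: "\<forall>\<eta>\<in>Field r. hh \<eta> \<in> Field r \<and> insert \<eta> (absorbed \<eta>) \<subseteq> underS (hh \<eta>)"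
    by (metis bchoice)
  define K where "K = {k\<in>Field r. \<forall>x. x \<prec> k \<longrightarrow> hh x \<prec> k}"
  have K_Field: "K \<subseteq> Field r" unfolding K_def by blast
  have "hh ` Field r \<subseteq> Field r" using hh by blast
  hence "\<not> |K| \<le>o omega1" unfolding K_def by (rule closure_points_not_ordLeq_omega1)
  then obtain \<zeta> where \<zeta>: "\<zeta> \<in> Field r"
    and bounded: "\<forall>A. A \<subseteq> underS \<zeta> \<longrightarrow> countable A \<longrightarrow> (\<exists>k\<in>K. k \<prec> \<zeta> \<and> (\<forall>a\<in>A. a \<prec> k))"
    using exists_omega1_limit_point[OF K_Field] by blast
  let ?S = "F \<zeta> \<inter> W \<zeta>"
  have "\<forall>x\<in>?S. \<exists>\<xi>. \<xi> \<prec> \<zeta> \<and> x \<in> F \<xi>" unfolding W_def by blast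
  then obtain xi where xi: "\<forall>x\<in>?S. xi x \<prec> \<zeta> \<and> x \<in> F (xi x)"
    by (rule bchoice[elim_format]) blast
  have "xi ` ?S \<subseteq> underS \<zeta>" "countable (xi ` ?S)" using xi countable_F[OF \<zeta>] by auto
  from bounded[rule_format, OF this] obtain k
    where k: "k \<in> K" "k \<prec> \<zeta>" "\<forall>a\<in>xi ` ?S. a \<prec> k" by blast
  have "?S \<subseteq> W k"
  proof
    fix x assume "x \<in> ?S"
    hence "xi x \<prec> k" "x \<in> F (xi x)" using k(3) xi by simp_all
    thus "x \<in> W k" unfolding W_def by blast
  qed
  hence "\<zeta> \<in> absorbed k" using \<zeta> unfolding absorbed_def by blast
  hence \<zeta>_hh: "\<zeta> \<prec> hh k" using hh K_Field k(1) by blast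
  have "{k} \<subseteq> underS \<zeta>" "countable {k}" using k(2) by simp_all
  from bounded[rule_format, OF this] obtain k'
    where k': "k' \<in> K" "k' \<prec> \<zeta>" "\<forall>a\<in>{k}. a \<prec> k'" by blast
  have "hh k \<prec> k'" using k' unfolding K_def by simp
  hence "hh k \<prec> \<zeta>" using k'(2) by (rule below_trans)
  with \<zeta>_hh have "\<zeta> \<prec> \<zeta>" by (rule below_trans)
  thus False using below_irrefl by blast
qed

lemma weak_delta_system_Field:
  "\<exists>H'\<subseteq>Field r. \<not> |H'| \<le>o omega1 \<and>
     (\<exists>D. countable D \<and> (\<forall>h1\<in>H'. \<forall>h2\<in>H'. h1 \<noteq> h2 \<longrightarrow> F h1 \<inter> F h2 \<subseteq> D))"
proof -
  obtain \<eta> where "\<eta> \<in> Field r" and large: "\<not> |absorbed \<eta>| \<le>o omega1"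
    using exists_large_absorbed by blast
  have "countable (F g \<inter> W \<eta>) \<and> F g \<inter> W \<eta> \<subseteq> W \<eta>" if "g \<in> absorbed \<eta>" for g
    using countable_F that unfolding absorbed_def by simp
  from pigeonhole_countable_subsets[where S = "\<lambda>g. F g \<inter> W \<eta>", OF card_of_W_ordLeq large this]
  obtain G' D
    where G': "G' \<subseteq> absorbed \<eta>" "\<not> |G'| \<le>o omega1"
      and D: "countable D" "\<forall>g\<in>G'. F g \<inter> W \<eta> \<subseteq> D" by blast
  have G'_Field: "G' \<subseteq> Field r" using G'(1) unfolding absorbed_def by blast
  have ordered: "F h1 \<inter> F h2 \<subseteq> D" if "h2 \<in> G'" "h1 \<prec> h2" for h1 h2
  proof -
    have "F h1 \<subseteq> W h2" using that(2) unfolding W_def by blast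
    hence "F h1 \<inter> F h2 \<subseteq> F h2 \<inter> W \<eta>" using that(1) G'(1) unfolding absorbed_def by blast
    thus ?thesis using D(2) that(1) by blast
  qed
  have "F h1 \<inter> F h2 \<subseteq> D" if "h1 \<in> G'" "h2 \<in> G'" "h1 \<noteq> h2" for h1 h2
  proof -
    have "h1 \<in> Field r" "h2 \<in> Field r" using that(1,2) G'_Field by blast+
    hence "h1 \<prec> h2 \<or> h2 \<prec> h1" using below_linear[of h1 h2] that(3) by blast
    thus ?thesis using ordered[OF that(2)] ordered[OF that(1)] by blast
  qed
  thus ?thesis using G'(2) D(1) G'_Field by blast
qed

end

lemma weak_delta_system:
  assumes H: "|H| =o cardSuc omega1" and F: "\<And>h. h \<in> H \<Longrightarrow> countable (F h)"
  shows "\<exists>H'\<subseteq>H. |H'| =o cardSuc omega1 \<and>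
           (\<exists>D. countable D \<and> (\<forall>h1\<in>H'. \<forall>h2\<in>H'. h1 \<noteq> h2 \<longrightarrow> F h1 \<inter> F h2 \<subseteq> D))"
proof -
  interpret omega2_family "|H|" F
  proof unfold_locales
    show "Card_order |H|" by (rule card_of_Card_order)
    show "|H| =o cardSuc omega1" by (rule H)
    show "countable (F h)" if "h \<in> Field |H|" for h using F that by (simp add: Field_card_of)
  qed
  from weak_delta_system_Field[unfolded Field_card_of] obtain H' where
    H': "H' \<subseteq> H" "\<not> |H'| \<le>o omega1"
    "\<exists>D. countable D \<and> (\<forall>h1\<in>H'. \<forall>h2\<in>H'. h1 \<noteq> h2 \<longrightarrow> F h1 \<inter> F h2 \<subseteq> D)"
    by blast
  moreover have "|H'| =o cardSuc omega1" using H' by (intro ordIso_omega2_subset[OF H])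
  ultimately show ?thesis by blast
qed

section \<open>Tight \<open>\<sigma>\<close>-filtrations\<close>

lemma is_succ_unique: "is_succ b a \<Longrightarrow> is_succ b' a \<Longrightarrow> b = b'"
  unfolding is_succ_def by (metis neqE)

lemma is_succ_le: "is_succ b a \<Longrightarrow> a < c \<Longrightarrow> b \<le> c"
  unfolding is_succ_def by (metis not_le)

lemma is_succ_lessThan:
  assumes "is_succ b a"
  shows "{..<b} = insert a {..<a}"
proof -
  have "a < b" and between: "\<And>c. a < c \<Longrightarrow> c < b \<Longrightarrow> False"
    using assms unfolding is_succ_def by blast+
  have "x = a" if "x < b" "\<not> x < a" for x
    using that between[of x] by (cases "a < x") auto
  thus ?thesis using \<open>a < b\<close> by auto
qed

lemma wellorder_cases:
  fixes \<gamma> :: "'i::wellorder"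
  obtains (succ) \<beta> where "is_succ \<gamma> \<beta>" | (limit) "is_limit \<gamma>" | (least) "\<And>\<beta>. \<gamma> \<le> \<beta>"
proof -
  consider "\<exists>\<beta>. is_succ \<gamma> \<beta>" | "is_limit \<gamma>" | "\<not> (\<exists>\<beta>. \<beta> < \<gamma>)"
    unfolding is_limit_def by blast
  thus ?thesis using that by cases (auto simp: not_less)
qed

locale tight_filtration =
  fixes Bf :: "'i::wellorder \<Rightarrow> 'a::boolean_algebra set"
  assumes tight: "tight_sigma_filtration Bf"
begin

lemmas tight_conds = tight[unfolded tight_sigma_filtration_def]

lemma subalgebra_Bf: "subalgebra (Bf \<alpha>)"
  using tight_conds[THEN conjunct1] by blast

lemma Bf_mono: "\<alpha> \<le> \<beta> \<Longrightarrow> Bf \<alpha> \<subseteq> Bf \<beta>"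
  using tight_conds[THEN conjunct2, THEN conjunct1] by blast

lemma Bf_least: "(\<And>\<beta>. \<alpha> \<le> \<beta>) \<Longrightarrow> Bf \<alpha> = {bot, top}"
  using tight_conds[THEN conjunct2, THEN conjunct2, THEN conjunct1] by blast

lemma UN_Bf: "(\<Union>\<alpha>. Bf \<alpha>) = UNIV"
  using tight_conds[THEN conjunct2, THEN conjunct2, THEN conjunct2, THEN conjunct1] .

lemma Bf_limit: "is_limit \<alpha> \<Longrightarrow> Bf \<alpha> = (\<Union>\<beta>\<in>{\<beta>. \<beta> < \<alpha>}. Bf \<beta>)"
  using tight_conds[THEN conjunct2, THEN conjunct2, THEN conjunct2, THEN conjunct2, THEN conjunct1]
  by blast

lemma Bf_succ:
  "is_succ \<beta> \<alpha> \<Longrightarrow> \<exists>R S. countable R \<and> countable S \<and> subalgebra R \<and> subalgebra S \<and>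
     pushout R (Bf \<alpha>) S (Bf \<beta>)"
  using tight_conds[THEN conjunct2, THEN conjunct2, THEN conjunct2, THEN conjunct2, THEN conjunct2]
  by blast

definition steps :: "'i set" where
  "steps = {\<alpha>. \<exists>\<beta>. is_succ \<beta> \<alpha>}"

definition succ :: "'i \<Rightarrow> 'i" where
  "succ \<alpha> = (SOME \<beta>. is_succ \<beta> \<alpha>)"

definition square :: "'i \<Rightarrow> 'a set \<times> 'a set" where
  "square \<alpha> = (SOME (R, S). countable R \<and> countable S \<and> subalgebra R \<and> subalgebra S \<and>
                  pushout R (Bf \<alpha>) S (Bf (succ \<alpha>)))"

definition R_of :: "'i \<Rightarrow> 'a set" where
  "R_of \<alpha> = fst (square \<alpha>)"

definition S_of :: "'i \<Rightarrow> 'a set" where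
  "S_of \<alpha> = snd (square \<alpha>)"

lemma is_succ_succ: "\<alpha> \<in> steps \<Longrightarrow> is_succ (succ \<alpha>) \<alpha>"
  unfolding steps_def succ_def by (rule someI_ex) blast

lemma less_succ: "\<alpha> \<in> steps \<Longrightarrow> \<alpha> < succ \<alpha>"
  using is_succ_succ unfolding is_succ_def by blast

lemma square:
  assumes "\<alpha> \<in> steps"
  shows "countable (R_of \<alpha>) \<and> countable (S_of \<alpha>) \<and> subalgebra (R_of \<alpha>) \<and> subalgebra (S_of \<alpha>) \<and>
    pushout (R_of \<alpha>) (Bf \<alpha>) (S_of \<alpha>) (Bf (succ \<alpha>))"
proof -
  have "\<exists>p. case p of (R, S) \<Rightarrow> countable R \<and> countable S \<and> subalgebra R \<and> subalgebra S \<and>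
           pushout R (Bf \<alpha>) S (Bf (succ \<alpha>))"
    using Bf_succ[OF is_succ_succ[OF assms]] by auto
  hence "case square \<alpha> of (R, S) \<Rightarrow> countable R \<and> countable S \<and> subalgebra R \<and> subalgebra S \<and>
           pushout R (Bf \<alpha>) S (Bf (succ \<alpha>))"
    unfolding square_def by (rule someI_ex)
  thus ?thesis unfolding R_of_def S_of_def by (simp split: prod.splits)
qed

lemma
  assumes "\<alpha> \<in> steps"
  shows countable_R_of: "countable (R_of \<alpha>)" and countable_S_of: "countable (S_of \<alpha>)"
    and subalgebra_S_of: "subalgebra (S_of \<alpha>)"
    and R_of_subset_Bf: "R_of \<alpha> \<subseteq> Bf \<alpha>" and S_of_subset_Bf_succ: "S_of \<alpha> \<subseteq> Bf (succ \<alpha>)"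
    and Bf_succ_eq: "Bf (succ \<alpha>) = generated (Bf \<alpha> \<union> S_of \<alpha>)"
  using square[OF assms] unfolding pushout_def by simp_all

lemma commute_over_Bf_S_of: "\<alpha> \<in> steps \<Longrightarrow> commute_over (Bf \<alpha>) (S_of \<alpha>) (R_of \<alpha>)"
  using square commute_imp_commute_over unfolding pushout_def by metis

definition algebra_of :: "'i set \<Rightarrow> 'a set" where
  "algebra_of X = generated (\<Union>\<beta>\<in>X. S_of \<beta>)"

definition closed :: "'i set \<Rightarrow> bool" where
  "closed X \<longleftrightarrow> X \<subseteq> steps \<and> (\<forall>\<beta>\<in>X. R_of \<beta> \<subseteq> algebra_of (X \<inter> {..<\<beta>}))"

lemma subalgebra_algebra_of: "subalgebra (algebra_of X)"
  unfolding algebra_of_def by (rule subalgebra_generated)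

lemma algebra_of_mono: "X \<subseteq> Y \<Longrightarrow> algebra_of X \<subseteq> algebra_of Y"
  unfolding algebra_of_def by (rule generated_mono) blast

lemma S_of_subset_algebra_of: "\<beta> \<in> X \<Longrightarrow> S_of \<beta> \<subseteq> algebra_of X"
  unfolding algebra_of_def using generated_superset by blast

lemma algebra_of_insert: "algebra_of (insert \<beta> X) = generated (algebra_of X \<union> S_of \<beta>)"
  unfolding algebra_of_def generated_Un_generated by (rule arg_cong[where f = generated]) blast

lemma algebra_of_subset_Bf: "X \<subseteq> steps \<Longrightarrow> algebra_of (X \<inter> {..<\<beta>}) \<subseteq> Bf \<beta>"
  unfolding algebra_of_def
proof (intro generated_minimal[OF subalgebra_Bf] UN_least)
  fix \<delta> assume "X \<subseteq> steps" "\<delta> \<in> X \<inter> {..<\<beta>}"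
  hence "S_of \<delta> \<subseteq> Bf (succ \<delta>)" "succ \<delta> \<le> \<beta>"
    using S_of_subset_Bf_succ is_succ_le[OF is_succ_succ] by auto
  thus "S_of \<delta> \<subseteq> Bf \<beta>" using Bf_mono by blast
qed

lemma closed_subset_steps: "closed X \<Longrightarrow> X \<subseteq> steps"
  unfolding closed_def by blast

lemma closed_empty: "closed {}"
  unfolding closed_def by blast

lemma closed_Union: "(\<And>X. X \<in> XX \<Longrightarrow> closed X) \<Longrightarrow> closed (\<Union>XX)"
  unfolding closed_def
proof (intro conjI ballI)
  fix \<beta> assume "\<And>X. X \<in> XX \<Longrightarrow> X \<subseteq> steps \<and> (\<forall>\<beta>\<in>X. R_of \<beta> \<subseteq> algebra_of (X \<inter> {..<\<beta>}))"
    and "\<beta> \<in> \<Union>XX"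
  then obtain X where "X \<in> XX" "R_of \<beta> \<subseteq> algebra_of (X \<inter> {..<\<beta>})" by blast
  moreover from this have "algebra_of (X \<inter> {..<\<beta>}) \<subseteq> algebra_of (\<Union>XX \<inter> {..<\<beta>})"
    by (intro algebra_of_mono) blast
  ultimately show "R_of \<beta> \<subseteq> algebra_of (\<Union>XX \<inter> {..<\<beta>})" by blast
qed blast

lemma closed_Un: "closed X \<Longrightarrow> closed Y \<Longrightarrow> closed (X \<union> Y)"
  using closed_Union[of "{X, Y}"] by auto

lemma algebra_of_lessThan_mono: "d \<le> d' \<Longrightarrow> algebra_of (Z \<inter> {..<d}) \<subseteq> algebra_of (Z \<inter> {..<d'})"
  by (rule algebra_of_mono) auto

lemma algebra_of_directed:
  assumes I: "I \<noteq> {}" "\<And>d1 d2. d1 \<in> I \<Longrightarrow> d2 \<in> I \<Longrightarrow> max d1 d2 \<in> I"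
    and cofinal: "\<And>b. b \<in> Z \<Longrightarrow> \<exists>d\<in>I. b < d"
  shows "algebra_of Z \<subseteq> (\<Union>d\<in>I. algebra_of (Z \<inter> {..<d}))"
  unfolding algebra_of_def[of Z]
proof (rule generated_minimal)
  show "subalgebra (\<Union>d\<in>I. algebra_of (Z \<inter> {..<d}))"
  proof (rule subalgebra_directed_UN[OF subalgebra_algebra_of I(1)])
    fix d1 d2 assume "d1 \<in> I" "d2 \<in> I"
    thus "\<exists>d\<in>I. algebra_of (Z \<inter> {..<d1}) \<subseteq> algebra_of (Z \<inter> {..<d}) \<and>
        algebra_of (Z \<inter> {..<d2}) \<subseteq> algebra_of (Z \<inter> {..<d})"
      using I(2) algebra_of_lessThan_mono[of d1 "max d1 d2" Z] algebra_of_lessThan_mono[of d2 "max d1 d2" Z]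
      by auto
  qed
  show "(\<Union>b\<in>Z. S_of b) \<subseteq> (\<Union>d\<in>I. algebra_of (Z \<inter> {..<d}))"
  proof (intro UN_least)
    fix b assume b: "b \<in> Z"
    then obtain d where "d \<in> I" "b < d" using cofinal by blast
    thus "S_of b \<subseteq> (\<Union>d\<in>I. algebra_of (Z \<inter> {..<d}))"
      using S_of_subset_algebra_of[of b "Z \<inter> {..<d}"] b by blast
  qed
qed

lemma commute_over_directed:
  assumes I: "I \<noteq> {}" "\<And>d1 d2. d1 \<in> I \<Longrightarrow> d2 \<in> I \<Longrightarrow> max d1 d2 \<in> I"
    and cofinal: "\<And>b. b \<in> X \<union> Y \<Longrightarrow> \<exists>d\<in>I. b < d"
    and stages: "\<And>d. d \<in> I \<Longrightarrow>
      commute_over (algebra_of (X \<inter> {..<d})) (algebra_of (Y \<inter> {..<d})) (algebra_of (X \<inter> Y \<inter> {..<d}))"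
  shows "commute_over (algebra_of X) (algebra_of Y) (algebra_of (X \<inter> Y))"
  unfolding commute_over_def
proof (intro ballI impI)
  fix a c assume a: "a \<in> algebra_of X" and c: "c \<in> algebra_of Y" and ac: "inf a c = bot"
  have "\<exists>d\<in>I. b < d" if "b \<in> X \<or> b \<in> Y" for b using cofinal[of b] that by simp
  hence "algebra_of X \<subseteq> (\<Union>d\<in>I. algebra_of (X \<inter> {..<d}))"
    and "algebra_of Y \<subseteq> (\<Union>d\<in>I. algebra_of (Y \<inter> {..<d}))"
    by (simp_all add: algebra_of_directed[OF I])
  then obtain d1 d2 where d: "d1 \<in> I" "a \<in> algebra_of (X \<inter> {..<d1})"
    "d2 \<in> I" "c \<in> algebra_of (Y \<inter> {..<d2})"
    using a c by blast
  let ?d = "max d1 d2"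
  have "a \<in> algebra_of (X \<inter> {..<?d})" "c \<in> algebra_of (Y \<inter> {..<?d})"
    using d(2,4) algebra_of_lessThan_mono[of d1 ?d X] algebra_of_lessThan_mono[of d2 ?d Y] by auto
  then obtain e where "e \<in> algebra_of (X \<inter> Y \<inter> {..<?d})" "a \<le> e" "inf e c = bot"
    using commute_overD[OF stages[OF I(2)[OF d(1,3)]]] ac by blast
  moreover have "algebra_of (X \<inter> Y \<inter> {..<?d}) \<subseteq> algebra_of (X \<inter> Y)" by (rule algebra_of_mono) blast
  ultimately show "\<exists>e\<in>algebra_of (X \<inter> Y). a \<le> e \<and> inf e c = bot" by blast
qed

lemma commute_over_limit:
  assumes limit: "is_limit \<gamma>" and X: "closed X" and Y: "closed Y"
    and stages: "\<And>d. d < \<gamma> \<Longrightarrow>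
      commute_over (algebra_of (X \<inter> {..<d})) (algebra_of (Y \<inter> {..<d})) (algebra_of (X \<inter> Y \<inter> {..<d}))"
  shows "commute_over (algebra_of (X \<inter> {..<\<gamma>})) (algebra_of (Y \<inter> {..<\<gamma>}))
    (algebra_of (X \<inter> Y \<inter> {..<\<gamma>}))"
proof -
  have "X \<inter> Y \<inter> {..<\<gamma>} = X \<inter> {..<\<gamma>} \<inter> (Y \<inter> {..<\<gamma>})" by blast
  moreover have "commute_over (algebra_of (X \<inter> {..<\<gamma>})) (algebra_of (Y \<inter> {..<\<gamma>}))
      (algebra_of (X \<inter> {..<\<gamma>} \<inter> (Y \<inter> {..<\<gamma>})))"
  proof (rule commute_over_directed[where I = "{..<\<gamma>}"])
    show "{..<\<gamma>} \<noteq> {}" using limit unfolding is_limit_def by auto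
    show "\<exists>d\<in>{..<\<gamma>}. b < d" if "b \<in> X \<inter> {..<\<gamma>} \<union> Y \<inter> {..<\<gamma>}" for b
    proof -
      have b: "b \<in> steps" "b < \<gamma>" using that closed_subset_steps X Y by blast+
      hence "succ b \<le> \<gamma>" "succ b \<noteq> \<gamma>"
        using is_succ_le[OF is_succ_succ] is_succ_succ limit unfolding is_limit_def by blast+
      thus ?thesis using less_succ[OF b(1)] by auto
    qed
    fix d assume "d \<in> {..<\<gamma>}"
    hence "Z \<inter> {..<\<gamma>} \<inter> {..<d} = Z \<inter> {..<d}" "X \<inter> {..<\<gamma>} \<inter> (Y \<inter> {..<\<gamma>}) \<inter> {..<d} = X \<inter> Y \<inter> {..<d}"
      for Z by auto
    thus "commute_over (algebra_of (X \<inter> {..<\<gamma>} \<inter> {..<d})) (algebra_of (Y \<inter> {..<\<gamma>} \<inter> {..<d}))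
        (algebra_of (X \<inter> {..<\<gamma>} \<inter> (Y \<inter> {..<\<gamma>}) \<inter> {..<d}))"
      using stages \<open>d \<in> {..<\<gamma>}\<close> by simp
  qed simp
  ultimately show ?thesis by simp
qed

text \<open>At a successor stage \<open>\<beta> + 1\<close>, the push-out square at \<open>\<beta>\<close> lets \<open>S \<beta>\<close> be adjoined on
  the side(s) whose closed set contains \<open>\<beta>\<close>.\<close>

lemma adjoining_step:
  assumes "closed X" "closed Y" "\<beta> \<in> X"
    and "commute_over (algebra_of (X \<inter> {..<\<beta>})) (algebra_of (Y \<inter> {..<\<beta>})) (algebra_of (X \<inter> Y \<inter> {..<\<beta>}))"
  shows "adjoining (Bf \<beta>) (S_of \<beta>) (R_of \<beta>)
    (algebra_of (X \<inter> {..<\<beta>})) (algebra_of (Y \<inter> {..<\<beta>})) (algebra_of (X \<inter> Y \<inter> {..<\<beta>}))"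
  using assms closed_subset_steps[OF assms(1)] closed_subset_steps[OF assms(2)]
  by unfold_locales
     (auto simp: subalgebra_Bf subalgebra_S_of subalgebra_algebra_of commute_over_Bf_S_of
        closed_def intro!: algebra_of_subset_Bf)

lemma commute_over_succ:
  assumes succ: "is_succ \<gamma> \<beta>" and X: "closed X" and Y: "closed Y"
    and IH: "commute_over (algebra_of (X \<inter> {..<\<beta>})) (algebra_of (Y \<inter> {..<\<beta>}))
      (algebra_of (X \<inter> Y \<inter> {..<\<beta>}))"
  shows "commute_over (algebra_of (X \<inter> {..<\<gamma>})) (algebra_of (Y \<inter> {..<\<gamma>}))
    (algebra_of (X \<inter> Y \<inter> {..<\<gamma>}))"
proof -
  have lessThan: "Z \<inter> {..<\<gamma>} = (if \<beta> \<in> Z then insert \<beta> (Z \<inter> {..<\<beta>}) else Z \<inter> {..<\<beta>})" for Z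
    using is_succ_lessThan[OF succ] by auto
  have IH': "commute_over (algebra_of (Y \<inter> {..<\<beta>})) (algebra_of (X \<inter> {..<\<beta>}))
      (algebra_of (Y \<inter> X \<inter> {..<\<beta>}))"
    using commute_over_sym[OF IH subalgebra_algebra_of] by (simp add: Int_commute)
  consider "\<beta> \<in> X" "\<beta> \<in> Y" | "\<beta> \<in> X" "\<beta> \<notin> Y" | "\<beta> \<notin> X" "\<beta> \<in> Y" | "\<beta> \<notin> X" "\<beta> \<notin> Y"
    by blast
  thus ?thesis
  proof cases
    case 1
    thus ?thesis using adjoining.commute_over_adjoin_both[OF adjoining_step[OF X Y _ IH]]
      by (simp add: lessThan[of X] lessThan[of Y] lessThan[of "X \<inter> Y"] algebra_of_insert)
  next
    case 2
    thus ?thesis using adjoining.commute_over_adjoin_left[OF adjoining_step[OF X Y _ IH]]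
      by (simp add: lessThan[of X] lessThan[of Y] lessThan[of "X \<inter> Y"] algebra_of_insert)
  next
    case 3
    hence "commute_over (algebra_of (insert \<beta> (Y \<inter> {..<\<beta>}))) (algebra_of (X \<inter> {..<\<beta>}))
        (algebra_of (Y \<inter> X \<inter> {..<\<beta>}))"
      using adjoining.commute_over_adjoin_left[OF adjoining_step[OF Y X _ IH']]
      by (simp add: algebra_of_insert)
    hence "commute_over (algebra_of (X \<inter> {..<\<beta>})) (algebra_of (insert \<beta> (Y \<inter> {..<\<beta>})))
        (algebra_of (X \<inter> Y \<inter> {..<\<beta>}))"
      using commute_over_sym[OF _ subalgebra_algebra_of] by (simp add: Int_commute)
    thus ?thesis using 3 by (simp add: lessThan[of X] lessThan[of Y] lessThan[of "X \<inter> Y"])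
  next
    case 4
    thus ?thesis using IH by (simp add: lessThan[of X] lessThan[of Y] lessThan[of "X \<inter> Y"])
  qed
qed

lemma commute_over_lessThan:
  "closed X \<Longrightarrow> closed Y \<Longrightarrow>
     commute_over (algebra_of (X \<inter> {..<\<gamma>})) (algebra_of (Y \<inter> {..<\<gamma>})) (algebra_of (X \<inter> Y \<inter> {..<\<gamma>}))"
proof (induction \<gamma> rule: less_induct)
  case (less \<gamma>)
  show ?case
  proof (cases \<gamma> rule: wellorder_cases)
    case least
    hence "Z \<inter> {..<\<gamma>} = {}" for Z by (auto simp: not_less[symmetric])
    thus ?thesis by (simp add: commute_over_trivial)
  next
    case limit
    thus ?thesis using commute_over_limit less by blast
  next
    case (succ \<beta>)
    hence "\<beta> < \<gamma>" unfolding is_succ_def by blast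
    thus ?thesis using commute_over_succ[OF succ less.prems] less by blast
  qed
qed

lemma commute_over_closed:
  assumes "closed X" "closed Y"
  shows "commute_over (algebra_of X) (algebra_of Y) (algebra_of (X \<inter> Y))"
proof (rule commute_over_directed[where I = UNIV])
  show "\<exists>d\<in>UNIV. b < d" if "b \<in> X \<union> Y" for b
    using that less_succ closed_subset_steps assms by blast
qed (use commute_over_lessThan assms in auto)

definition supported :: "'i \<Rightarrow> 'a set" where
  "supported \<alpha> = {a. \<exists>X. countable X \<and> closed X \<and> X \<subseteq> {..<\<alpha>} \<and> a \<in> algebra_of X}"

lemma supportedI: "countable X \<Longrightarrow> closed X \<Longrightarrow> X \<subseteq> {..<\<alpha>} \<Longrightarrow> a \<in> algebra_of X \<Longrightarrow> a \<in> supported \<alpha>"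
  unfolding supported_def by blast

lemma supported_mono: "\<alpha> \<le> \<beta> \<Longrightarrow> supported \<alpha> \<subseteq> supported \<beta>"
  unfolding supported_def by fastforce

lemma subalgebra_supported: "subalgebra (supported \<alpha>)"
  unfolding subalgebra_def
proof (intro conjI ballI)
  show "bot \<in> supported \<alpha>" "top \<in> supported \<alpha>"
    using supportedI[OF countable_empty closed_empty empty_subsetI] subalgebra_algebra_of
    by (simp_all add: subalgebra_bot subalgebra_top)
next
  fix x y assume "x \<in> supported \<alpha>" "y \<in> supported \<alpha>"
  then obtain X Y where X: "countable X" "closed X" "X \<subseteq> {..<\<alpha>}" "x \<in> algebra_of X"
    and Y: "countable Y" "closed Y" "Y \<subseteq> {..<\<alpha>}" "y \<in> algebra_of Y"
    unfolding supported_def by blast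
  have XY: "countable (X \<union> Y)" "closed (X \<union> Y)" "X \<union> Y \<subseteq> {..<\<alpha>}"
    using X Y closed_Un by auto
  have "x \<in> algebra_of (X \<union> Y)" "y \<in> algebra_of (X \<union> Y)"
    using X(4) Y(4) algebra_of_mono[of X "X \<union> Y"] algebra_of_mono[of Y "X \<union> Y"] by auto
  thus "inf x y \<in> supported \<alpha>" "sup x y \<in> supported \<alpha>"
    using supportedI[OF XY] subalgebra_inf[OF subalgebra_algebra_of] subalgebra_sup[OF subalgebra_algebra_of]
    by simp_all
next
  fix x assume "x \<in> supported \<alpha>"
  then obtain X where "countable X" "closed X" "X \<subseteq> {..<\<alpha>}" "x \<in> algebra_of X"
    unfolding supported_def by blast
  thus "- x \<in> supported \<alpha>" using supportedI subalgebra_compl[OF subalgebra_algebra_of] by blast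
qed

lemma closed_insert_step:
  assumes \<beta>: "\<beta> \<in> steps" and R: "R_of \<beta> \<subseteq> supported \<beta>"
  shows "\<exists>X. countable X \<and> closed X \<and> X \<subseteq> {..\<beta>} \<and> \<beta> \<in> X"
proof -
  have "\<forall>r\<in>R_of \<beta>. \<exists>X. countable X \<and> closed X \<and> X \<subseteq> {..<\<beta>} \<and> r \<in> algebra_of X"
    using R unfolding supported_def by blast
  then obtain Xr where Xr: "\<forall>r\<in>R_of \<beta>. countable (Xr r) \<and> closed (Xr r) \<and> Xr r \<subseteq> {..<\<beta>} \<and>
      r \<in> algebra_of (Xr r)"
    by (rule bchoice[elim_format]) blast
  define X where "X = (\<Union>r\<in>R_of \<beta>. Xr r)"
  have X: "countable X" "closed X" "X \<subseteq> {..<\<beta>}"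
    unfolding X_def using Xr countable_R_of[OF \<beta>] by (auto intro!: closed_Union)
  have "R_of \<beta> \<subseteq> algebra_of X"
  proof
    fix r assume r: "r \<in> R_of \<beta>"
    hence "algebra_of (Xr r) \<subseteq> algebra_of X" unfolding X_def by (intro algebra_of_mono) blast
    thus "r \<in> algebra_of X" using Xr r by blast
  qed
  moreover have "insert \<beta> X \<inter> {..<\<beta>} = X" using X(3) by auto
  moreover have "insert \<beta> X \<inter> {..<b} = X \<inter> {..<b}" if "b \<in> X" for b
    using X(3) that by auto
  ultimately have "closed (insert \<beta> X)"
    using X(2) \<beta> unfolding closed_def by auto
  thus ?thesis using X by (intro exI[of _ "insert \<beta> X"]) auto
qed

lemma Bf_subset_supported: "Bf \<alpha> \<subseteq> supported \<alpha>"
proof (induction \<alpha> rule: less_induct)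
  case (less \<alpha>)
  show ?case
  proof (cases \<alpha> rule: wellorder_cases)
    case least
    hence "Bf \<alpha> = {bot, top}" by (rule Bf_least)
    thus ?thesis using subalgebra_bot[OF subalgebra_supported] subalgebra_top[OF subalgebra_supported]
      by simp
  next
    case limit
    show ?thesis
    proof
      fix a assume "a \<in> Bf \<alpha>"
      then obtain \<beta> where "\<beta> < \<alpha>" "a \<in> Bf \<beta>" using Bf_limit[OF limit] by blast
      hence "a \<in> supported \<beta>" using less.IH by blast
      thus "a \<in> supported \<alpha>" using supported_mono[OF less_imp_le[OF \<open>\<beta> < \<alpha>\<close>]] by blast
    qed
  next
    case (succ \<beta>)
    have \<beta>: "\<beta> \<in> steps" and "\<beta> < \<alpha>" using succ unfolding steps_def is_succ_def by blast+
    have "succ \<beta> = \<alpha>" by (rule is_succ_unique[OF is_succ_succ[OF \<beta>] succ])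
    have IH: "Bf \<beta> \<subseteq> supported \<beta>" by (rule less.IH[OF \<open>\<beta> < \<alpha>\<close>])
    have "Bf \<beta> \<subseteq> supported \<alpha>"
      using IH supported_mono[OF less_imp_le[OF \<open>\<beta> < \<alpha>\<close>]] by blast
    moreover have "S_of \<beta> \<subseteq> supported \<alpha>"
    proof -
      obtain X where X: "countable X" "closed X" "X \<subseteq> {..\<beta>}" "\<beta> \<in> X"
        using closed_insert_step[OF \<beta> order_trans[OF R_of_subset_Bf[OF \<beta>] IH]] by blast
      have "X \<subseteq> {..<\<alpha>}" using X(3) \<open>\<beta> < \<alpha>\<close> by auto
      thus ?thesis using supportedI[OF X(1,2)] S_of_subset_algebra_of[OF X(4)] by blast
    qed
    ultimately have "generated (Bf \<beta> \<union> S_of \<beta>) \<subseteq> supported \<alpha>"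
      by (intro generated_minimal[OF subalgebra_supported]) simp
    thus ?thesis using Bf_succ_eq[OF \<beta>] \<open>succ \<beta> = \<alpha>\<close> by simp
  qed
qed

lemma exists_closed_support: "\<exists>X. countable X \<and> closed X \<and> a \<in> algebra_of X"
proof -
  have "a \<in> (\<Union>\<alpha>. Bf \<alpha>)" using UN_Bf by blast
  then obtain \<alpha> where "a \<in> Bf \<alpha>" by blast
  hence "a \<in> supported \<alpha>" using Bf_subset_supported by blast
  thus ?thesis unfolding supported_def by blast
qed

lemma countable_subset_algebra_of_closed:
  assumes "countable H"
  shows "\<exists>X. countable X \<and> closed X \<and> H \<subseteq> algebra_of X"
proof -
  have "\<forall>a\<in>H. \<exists>X. countable X \<and> closed X \<and> a \<in> algebra_of X"
    using exists_closed_support by blast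
  then obtain Xa where Xa: "\<forall>a\<in>H. countable (Xa a) \<and> closed (Xa a) \<and> a \<in> algebra_of (Xa a)"
    by (rule bchoice[elim_format]) blast
  let ?X = "\<Union>a\<in>H. Xa a"
  have "countable ?X" using Xa assms by (intro countable_UN) auto
  moreover have "closed ?X" using Xa by (intro closed_Union) auto
  moreover have "H \<subseteq> algebra_of ?X"
  proof
    fix a assume "a \<in> H"
    moreover from this have "algebra_of (Xa a) \<subseteq> algebra_of ?X" by (intro algebra_of_mono) blast
    ultimately show "a \<in> algebra_of ?X" using Xa by blast
  qed
  ultimately show ?thesis by blast
qed

lemma countable_steps_subset_closed:
  assumes "countable D" "D \<subseteq> steps"
  shows "\<exists>X. countable X \<and> closed X \<and> D \<subseteq> X"
proof -
  have "\<exists>X. countable X \<and> closed X \<and> d \<in> X" if "d \<in> D" for d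
  proof -
    have d: "d \<in> steps" using that assms(2) by blast
    show ?thesis
      using closed_insert_step[OF d order_trans[OF R_of_subset_Bf[OF d] Bf_subset_supported]] by blast
  qed
  then obtain Xd where Xd: "\<forall>d\<in>D. countable (Xd d) \<and> closed (Xd d) \<and> d \<in> Xd d"
    by (metis (mono_tags, lifting) bchoice)
  let ?X = "\<Union>d\<in>D. Xd d"
  have "countable ?X" using Xd assms(1) by (intro countable_UN) auto
  moreover have "closed ?X" using Xd by (intro closed_Union) auto
  moreover have "D \<subseteq> ?X" using Xd by blast
  ultimately show ?thesis by blast
qed

lemma countable_algebra_of: "countable X \<Longrightarrow> X \<subseteq> steps \<Longrightarrow> countable (algebra_of X)"
  unfolding algebra_of_def using countable_S_of by (intro countable_generated countable_UN) auto

end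

definition interpolating :: "'a::boolean_algebra set \<Rightarrow> 'a set set \<Rightarrow> bool" where
  "interpolating R \<H> \<longleftrightarrow>
     (\<forall>n P (Hs :: nat \<Rightarrow> 'a set) (a :: nat \<Rightarrow> 'a).
        bvars P \<subseteq> {..<n} \<longrightarrow> (\<forall>i<n. Hs i \<in> \<H>) \<longrightarrow> inj_on Hs {..<n} \<longrightarrow>
        (\<forall>i<n. a i \<in> Hs i) \<longrightarrow> beval P a = bot \<longrightarrow>
        (\<exists>rm rp. (\<forall>i<n. rm i \<in> R \<and> rp i \<in> R \<and> rm i \<le> a i \<and> a i \<le> rp i) \<and>
                 (\<forall>eps :: nat \<Rightarrow> bool. beval P (\<lambda>i. if eps i then rp i else rm i) = bot)))"

context tight_filtration
begin

lemma interpolation_closed: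
  assumes Z: "\<And>i. i < n \<Longrightarrow> closed (Z i)" and D: "closed D"
    and disjoint: "\<And>i j. i < n \<Longrightarrow> j < n \<Longrightarrow> i \<noteq> j \<Longrightarrow> Z i \<inter> Z j \<subseteq> D"
    and P: "bvars P \<subseteq> {..<n}" and v: "\<forall>i<n. v i \<in> algebra_of (Z i)" and Pv: "beval P v = bot"
  shows "\<exists>rm rp. (\<forall>i<n. rm i \<in> algebra_of D \<and> rp i \<in> algebra_of D \<and> rm i \<le> v i \<and> v i \<le> rp i) \<and>
           (\<forall>eps. beval P (\<lambda>i. if eps i then rp i else rm i) = bot)"
proof (rule interpolation[where A = "\<lambda>i. algebra_of (Z i)" and E = "algebra_of D", OF _ _ _ P v Pv])
  fix m assume m: "m < n"
  let ?Y = "D \<union> (\<Union>i<m. Z i)"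
  have "closed ?Y" using D Z m by (intro closed_Un closed_Union) auto
  hence "commute_over (algebra_of (Z m)) (algebra_of ?Y) (algebra_of (Z m \<inter> ?Y))"
    by (rule commute_over_closed[OF Z[OF m]])
  moreover have "generated (algebra_of D \<union> (\<Union>i<m. algebra_of (Z i))) \<subseteq> algebra_of ?Y"
  proof (rule generated_minimal[OF subalgebra_algebra_of])
    have "algebra_of D \<subseteq> algebra_of ?Y" by (rule algebra_of_mono) blast
    moreover have "algebra_of (Z i) \<subseteq> algebra_of ?Y" if "i < m" for i
      using that by (intro algebra_of_mono) blast
    ultimately show "algebra_of D \<union> (\<Union>i<m. algebra_of (Z i)) \<subseteq> algebra_of ?Y" by blast
  qed
  moreover have "Z m \<inter> ?Y \<subseteq> D"
  proof
    fix x assume "x \<in> Z m \<inter> ?Y"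
    then consider "x \<in> D" | i where "i < m" "x \<in> Z i \<inter> Z m" by blast
    thus "x \<in> D"
    proof cases
      case 2
      thus ?thesis using disjoint[of i m] m by auto
    qed
  qed
  hence "algebra_of (Z m \<inter> ?Y) \<subseteq> algebra_of D" by (rule algebra_of_mono)
  ultimately show "commute_over (algebra_of (Z m)) (generated (algebra_of D \<union> (\<Union>i<m. algebra_of (Z i))))
      (algebra_of D)"
    by (rule commute_over_mono[OF _ order_refl])
qed (simp_all add: subalgebra_algebra_of)

lemma exists_closed_supports:
  assumes "\<forall>H\<in>\<H>. countable H"
  shows "\<exists>X. \<forall>H\<in>\<H>. countable (X H) \<and> closed (X H) \<and> H \<subseteq> algebra_of (X H)"
proof -
  have "\<forall>H\<in>\<H>. \<exists>X. countable X \<and> closed X \<and> H \<subseteq> algebra_of X"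
  proof
    fix H assume "H \<in> \<H>"
    thus "\<exists>X. countable X \<and> closed X \<and> H \<subseteq> algebra_of X"
      using assms by (intro countable_subset_algebra_of_closed) blast
  qed
  thus ?thesis by (rule bchoice)
qed

lemma interpolating_supports:
  assumes X: "\<And>H. H \<in> \<H> \<Longrightarrow> closed (X H) \<and> H \<subseteq> algebra_of (X H)" and D: "closed D"
    and disjoint: "\<And>H1 H2. H1 \<in> \<H> \<Longrightarrow> H2 \<in> \<H> \<Longrightarrow> H1 \<noteq> H2 \<Longrightarrow> X H1 \<inter> X H2 \<subseteq> D"
  shows "interpolating (algebra_of D) \<H>"
  unfolding interpolating_def
proof (intro allI impI)
  fix n P and Hs :: "nat \<Rightarrow> 'a set" and a :: "nat \<Rightarrow> 'a"
  assume P: "bvars P \<subseteq> {..<n}" and Hs: "\<forall>i<n. Hs i \<in> \<H>" "inj_on Hs {..<n}"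
    and a: "\<forall>i<n. a i \<in> Hs i" and Pa: "beval P a = bot"
  show "\<exists>rm rp. (\<forall>i<n. rm i \<in> algebra_of D \<and> rp i \<in> algebra_of D \<and> rm i \<le> a i \<and> a i \<le> rp i) \<and>
      (\<forall>eps. beval P (\<lambda>i. if eps i then rp i else rm i) = bot)"
  proof (rule interpolation_closed[where Z = "\<lambda>i. X (Hs i)", OF _ D _ P _ Pa])
    show "closed (X (Hs i))" if "i < n" for i using X[OF Hs(1)[rule_format, OF that]] by blast
    show "X (Hs i) \<inter> X (Hs j) \<subseteq> D" if "i < n" "j < n" "i \<noteq> j" for i j
    proof -
      have "Hs i \<noteq> Hs j" using Hs(2) that unfolding inj_on_def by blast
      with Hs(1) that(1,2) show ?thesis by (intro disjoint) simp_all
    qed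
    show "\<forall>i<n. a i \<in> algebra_of (X (Hs i))"
    proof (intro allI impI)
      fix i assume "i < n"
      thus "a i \<in> algebra_of (X (Hs i))" using a X[OF Hs(1)[rule_format, OF \<open>i < n\<close>]] by blast
    qed
  qed
qed

end

theorem theorem4p2:
  fixes Bf :: "'i::wellorder \<Rightarrow> 'a::boolean_algebra set"
    and \<H> :: "'a set set"
  assumes "tight_sigma_filtration Bf"
    and "\<forall>H\<in>\<H>. countable H"
    and "(card_of \<H>, omega2) \<in> ordIso"
  shows "\<exists>\<H>'\<subseteq>\<H>. (card_of \<H>', omega2) \<in> ordIso \<and>
     (\<exists>R. countable R \<and> subalgebra R \<and>
       (\<forall>n P (Hs :: nat \<Rightarrow> 'a set) (a :: nat \<Rightarrow> 'a).
          bvars P \<subseteq> {..<n} \<longrightarrow> (\<forall>i<n. Hs i \<in> \<H>') \<longrightarrow> inj_on Hs {..<n} \<longrightarrow>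
          (\<forall>i<n. a i \<in> Hs i) \<longrightarrow> beval P a = bot \<longrightarrow>
          (\<exists>rm rp. (\<forall>i<n. rm i \<in> R \<and> rp i \<in> R \<and> rm i \<le> a i \<and> a i \<le> rp i) \<and>
                   (\<forall>eps :: nat \<Rightarrow> bool. beval P (\<lambda>i. if eps i then rp i else rm i) = bot))))"
proof -
  interpret tight_filtration Bf by (rule tight_filtration.intro) (rule assms(1))
  obtain X where X: "\<forall>H\<in>\<H>. countable (X H) \<and> closed (X H) \<and> H \<subseteq> algebra_of (X H)"
    using exists_closed_supports[OF assms(2)] by blast
  have "\<And>H. H \<in> \<H> \<Longrightarrow> countable (X H)" using X by blast
  from weak_delta_system[where F = X, OF assms(3) this] obtain \<H>' D where
    \<H>': "\<H>' \<subseteq> \<H>" "|\<H>'| =o omega2" and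
    D: "countable D" "\<forall>H1\<in>\<H>'. \<forall>H2\<in>\<H>'. H1 \<noteq> H2 \<longrightarrow> X H1 \<inter> X H2 \<subseteq> D"
    by blast
  obtain D' where D': "countable D'" "closed D'" "D \<inter> steps \<subseteq> D'"
    using countable_steps_subset_closed[of "D \<inter> steps"] D(1) by auto
  have X': "closed (X H) \<and> H \<subseteq> algebra_of (X H)" if "H \<in> \<H>'" for H
    using X \<H>'(1) that by blast
  have disjoint: "X H1 \<inter> X H2 \<subseteq> D'" if "H1 \<in> \<H>'" "H2 \<in> \<H>'" "H1 \<noteq> H2" for H1 H2
  proof -
    have "X H1 \<subseteq> steps" using X'[OF that(1)] closed_subset_steps by blast
    moreover have "X H1 \<inter> X H2 \<subseteq> D" using D(2) that by blast
    ultimately show ?thesis using D'(3) by blast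
  qed
  have "interpolating (algebra_of D') \<H>'" using interpolating_supports[OF X' D'(2) disjoint] .
  moreover have "countable (algebra_of D')"
    using countable_algebra_of[OF D'(1) closed_subset_steps[OF D'(2)]] .
  ultimately show ?thesis unfolding interpolating_def
    by (intro exI[of _ \<H>'] exI[of _ "algebra_of D'"] conjI \<H>' subalgebra_algebra_of)
qed

end
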